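(* Let $n,m,k$ be integers with $m\geq 1$, $k\geq 3$ and $n\geq 6m+7$. Then $$ gr_{k}(K_{3} : S(n,m))=\begin{cases} 5\cdot\frac{n}{2} + m(k-3)+1 & \text{ if $n$ is even,}\\ 5\cdot\frac{n-1}{2} + m(k-3)+ 2 & \text{ if $n$ is odd.} \end{cases} $$
   Context: For integers $n\geq m\geq 0$, the double star $S(n,m)$ is the graph obtained from the disjoint union of the stars $K_{1,n}$ and $K_{1,m}$ by adding an edge between their centers. A $k$-coloring of a graph is an assignment of one of $k$ colors to each edge. A subgraph is rainbow if all its edges have distinct colors and monochromatic if all its edges have the same color. For graphs $G,H$ and a positive integer $k$, the Gallai–Ramsey number $gr_k(G:H)$ is the minimum integer $N$ such that every $k$-coloring of the edges of the complete graph $K_N$ contains either a rainbow copy of $G$ or a monochromatic copy of $H$. *)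

theory Defs
  imports Main
begin

text \<open>The complete graph K_N has vertex set {0..<N}.
A k-colouring uses colours from {0..<k} (not necessarily all of them).\<close>

definition k_coloring :: "nat \<Rightarrow> nat \<Rightarrow> (nat \<Rightarrow> nat \<Rightarrow> nat) \<Rightarrow> bool" where
  "k_coloring k N c \<longleftrightarrow>
     (\<forall>x<N. \<forall>y<N. x \<noteq> y \<longrightarrow> c x y = c y x \<and> c x y < k)"

definition rainbow_K3 :: "nat \<Rightarrow> (nat \<Rightarrow> nat \<Rightarrow> nat) \<Rightarrow> bool" where
  "rainbow_K3 N c \<longleftrightarrow>
     (\<exists>x y z. x < N \<and> y < N \<and> z < N \<and> x \<noteq> y \<and> y \<noteq> z \<and> x \<noteq> z \<and>
        c x y \<noteq> c y z \<and> c y z \<noteq> c x z \<and> c x y \<noteq> c x z)"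

definition mono_double_star :: "nat \<Rightarrow> (nat \<Rightarrow> nat \<Rightarrow> nat) \<Rightarrow> nat \<Rightarrow> nat \<Rightarrow> bool" where
  "mono_double_star N c n m \<longleftrightarrow>
     (\<exists>u v A B. u < N \<and> v < N \<and> u \<noteq> v \<and>
        A \<subseteq> {0..<N} - {u, v} \<and> B \<subseteq> {0..<N} - {u, v} \<and> A \<inter> B = {} \<and>
        card A = n \<and> card B = m \<and>
        (\<forall>a\<in>A. c u a = c u v) \<and> (\<forall>b\<in>B. c v b = c u v))"

definition gr_K3_double_star :: "nat \<Rightarrow> nat \<Rightarrow> nat \<Rightarrow> nat" where
  "gr_K3_double_star k n m =
     (LEAST N. \<forall>c. k_coloring k N c \<longrightarrow> rainbow_K3 N c \<or> mono_double_star N c n m)"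

end

theory Submission
  imports Defs
begin

text \<open>
  Write n = 2p + e with e \<le> 1 and K = k - 3. For the upper bound, take a coloring of
  K_N with N = 5p + e + 1 + mK, no rainbow triangle and no monochromatic S(n,m), and a smallest
  set Q of at least n + m + 1 vertices that every outside vertex sees in a single color. A color
  leading out of Q occurs at at most m outside vertices, else it centres a double star together
  with Q. If at most two colors occur only inside Q, every vertex of Q has so many neighbours in
  these colors that double counting produces a double star. Otherwise at most K colors leave Q,
  so Q has at least 5p + e + 1 vertices; Gallai's theorem splits Q into homogeneous blocks, of
  size at most n + m by minimality, with only two colors between blocks, and the two-colored
  reduced graph is too small to avoid a double star.

  For the lower bound, blow up the pentagon/pentagram coloring of K_5 into blocks of size p
  (one of size p + e) and add K layers of m vertices, layer j joined in its own color to all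
  later vertices: every color class has degree at most n except the layer colors, whose second
  centre has only the m vertices of the layer available.
\<close>

section \<open>Gallai colorings and Gallai partitions\<close>

lemma two_distinct_avoiding:
  assumes "finite A" "3 \<le> card A"
  obtains g h where "g \<in> A" "h \<in> A" "g \<noteq> i" "h \<noteq> i" "g \<noteq> h"
proof -
  have "\<not> card (A - {i}) \<le> Suc 0"
    using assms card_Diff1_le[of A i] card_Diff_singleton_if[of A i] by (auto split: if_splits)
  then obtain g h where "g \<in> A - {i}" "h \<in> A - {i}" "g \<noteq> h"
    using assms(1) card_le_Suc0_iff_eq[of "A - {i}"] by blast
  then show thesis using that by blast
qed

lemma card_le_2_cases:
  assumes "finite A" "card A \<le> 2"
  obtains "A = {}" | r where "A = {r}" | r b where "A = {r, b}" "r \<noteq> b"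
proof -
  have "card A = 0 \<or> card A = 1 \<or> card A = 2" using assms(2) by linarith
  then show thesis
  proof (elim disjE)
    assume "card A = 0"
    then show thesis using that(1) assms(1) by simp
  next
    assume "card A = 1"
    then obtain r where "A = {r}" by (rule card_1_singletonE)
    then show thesis by (rule that(2))
  next
    assume "card A = 2"
    then show thesis using that(3) by (auto simp: card_2_iff)
  qed
qed

lemma subset_doubleton_of_card_le_2:
  assumes "finite A" "card A \<le> 2"
  obtains r b where "A \<subseteq> {r, b}"
proof (cases rule: card_le_2_cases[OF assms])
  case 1
  then show ?thesis using that by blast
next
  case (2 r)
  then show ?thesis using that[of r r] by blast
next
  case (3 r b)
  then show ?thesis using that[of r b] by blast
qed

definition block_partition :: "'a set \<Rightarrow> ('a \<Rightarrow> 'a set) \<Rightarrow> bool" where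
  "block_partition S part \<longleftrightarrow> (\<forall>x\<in>S. x \<in> part x \<and> part x \<subseteq> S \<and> (\<forall>y\<in>part x. part y = part x))"

lemma block_partition_sym:
  "block_partition S part \<Longrightarrow> x \<in> S \<Longrightarrow> y \<in> S \<Longrightarrow> y \<notin> part x \<Longrightarrow> x \<notin> part y"
  unfolding block_partition_def by metis

lemma block_partition_disjoint:
  "block_partition S part \<Longrightarrow> x \<in> S \<Longrightarrow> y \<in> S \<Longrightarrow> y \<notin> part x \<Longrightarrow> part x \<inter> part y = {}"
  unfolding block_partition_def by (metis disjoint_iff subsetD)

locale gallai_coloring =
  fixes V :: "'a set" and c :: "'a \<Rightarrow> 'a \<Rightarrow> 'b"
  assumes color_sym: "x \<in> V \<Longrightarrow> y \<in> V \<Longrightarrow> c x y = c y x"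
    and no_rainbow_triangle: "x \<in> V \<Longrightarrow> y \<in> V \<Longrightarrow> z \<in> V \<Longrightarrow> x \<noteq> y \<Longrightarrow> y \<noteq> z \<Longrightarrow> x \<noteq> z \<Longrightarrow>
       c x y = c y z \<or> c y z = c x z \<or> c x y = c x z"
begin

lemma third_side_color:
  assumes "x \<in> V" "y \<in> V" "z \<in> V" "x \<noteq> y" "y \<noteq> z" "x \<noteq> z" "c x y \<noteq> c x z"
  shows "c y z = c x y \<or> c y z = c x z"
  using no_rainbow_triangle[OF assms(1-6)] assms(7) by auto

definition color_edges :: "'b \<Rightarrow> 'a set \<Rightarrow> ('a \<times> 'a) set" where
  "color_edges i S = {(x, y). x \<in> S \<and> y \<in> S \<and> x \<noteq> y \<and> c x y = i}"

abbreviation color_reach :: "'b \<Rightarrow> 'a set \<Rightarrow> ('a \<times> 'a) set" where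
  "color_reach i S \<equiv> (color_edges i S)\<^sup>*"

definition colors :: "'a set \<Rightarrow> 'b set" where
  "colors S = {c x y | x y. x \<in> S \<and> y \<in> S \<and> x \<noteq> y}"

lemma colors_mono: "S' \<subseteq> S \<Longrightarrow> colors S' \<subseteq> colors S"
  unfolding colors_def by blast

lemma finite_colors: "finite S \<Longrightarrow> finite (colors S)"
proof -
  assume "finite S"
  have "colors S \<subseteq> (\<lambda>(x, y). c x y) ` (S \<times> S)" unfolding colors_def by force
  then show ?thesis using \<open>finite S\<close> by (simp add: finite_subset)
qed

lemma color_reach_sym:
  assumes "S \<subseteq> V" "(x, y) \<in> color_reach i S"
  shows "(y, x) \<in> color_reach i S"
proof -
  have "color_edges i S \<subseteq> (color_edges i S)\<inverse>"
    using assms(1) color_sym unfolding color_edges_def by auto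
  then have "(color_edges i S)\<^sup>* \<subseteq> ((color_edges i S)\<inverse>)\<^sup>*" by (rule rtrancl_mono)
  then show ?thesis using assms(2) by (auto simp: rtrancl_converse)
qed

lemma color_reach_trans_sym:
  "S \<subseteq> V \<Longrightarrow> (x, y) \<in> color_reach i S \<Longrightarrow> (z, y) \<in> color_reach i S \<Longrightarrow> (x, z) \<in> color_reach i S"
  by (meson color_reach_sym rtrancl_trans)

text \<open>An i-edge u w with c u y \<noteq> c w y would form a rainbow triangle with y, since neither
  u y nor w y has color i.\<close>

lemma color_const_on_component:
  assumes S: "S \<subseteq> V" and xx': "(x, x') \<in> color_reach i S" and y: "y \<in> S"
    and not_reach: "(x, y) \<notin> color_reach i S"
  shows "c x y = c x' y"
  using xx'
proof (induction rule: rtrancl_induct)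
  case base
  show ?case by simp
next
  case (step u w)
  have uw: "u \<in> S" "w \<in> S" "u \<noteq> w" "c u w = i" using step.hyps(2) by (auto simp: color_edges_def)
  have "(x, w) \<in> color_reach i S" using step.hyps by (rule rtrancl_into_rtrancl)
  have no_edge: "(v, y) \<notin> color_edges i S" if "(x, v) \<in> color_reach i S" for v
    using not_reach that by (meson rtrancl_into_rtrancl)
  have "u \<noteq> y" "w \<noteq> y" using not_reach step.hyps(1) \<open>(x, w) \<in> color_reach i S\<close> by auto
  moreover have "c u y \<noteq> i" "c w y \<noteq> i"
    using no_edge[OF step.hyps(1)] no_edge[OF \<open>(x, w) \<in> color_reach i S\<close>] uw y calculation
    by (auto simp: color_edges_def)
  ultimately have "c w y = c u y"
    using no_rainbow_triangle[of u w y] uw y S by auto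
  then show ?case using step.IH by simp
qed

lemma color_reach_last_edge:
  assumes S: "S \<subseteq> V" and "(w, v) \<in> color_reach i S" "w \<in> S" "w \<noteq> v"
  shows "\<exists>y \<in> S - {v}. (w, y) \<in> color_reach i (S - {v}) \<and> c y v = i"
  using assms(2-4)
proof (induction rule: converse_rtrancl_induct)
  case base
  then show ?case by simp
next
  case (step w w1)
  have w1: "w1 \<in> S" "c w w1 = i" "w \<noteq> w1" using step.hyps(1) by (auto simp: color_edges_def)
  show ?case
  proof (cases "w1 = v")
    case True
    then show ?thesis using w1 step.prems by auto
  next
    case False
    then obtain y where y: "y \<in> S - {v}" "(w1, y) \<in> color_reach i (S - {v})" "c y v = i"
      using step.IH w1 by blast
    have "(w, w1) \<in> color_edges i (S - {v})" using w1 False step.prems by (auto simp: color_edges_def)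
    then have "(w, y) \<in> color_reach i (S - {v})" using y(2) by (rule converse_rtrancl_into_rtrancl)
    then show ?thesis using y by blast
  qed
qed

definition spanning_color :: "'b \<Rightarrow> 'a set \<Rightarrow> bool" where
  "spanning_color i S \<longleftrightarrow> (\<forall>x\<in>S. \<forall>y\<in>S. (x, y) \<in> color_reach i S)"

lemma spanning_color_edge_at:
  assumes "spanning_color g S" "g \<in> colors S" "x \<in> S"
  obtains y where "y \<in> S" "y \<noteq> x" "c x y = g"
proof -
  obtain a b where ab: "a \<in> S" "b \<in> S" "a \<noteq> b" "c a b = g" using assms(2) unfolding colors_def by blast
  show thesis
  proof (cases "x = a")
    case True
    then show ?thesis using ab that by auto
  next
    case False
    have "(x, a) \<in> color_reach g S" using assms(1,3) ab(1) unfolding spanning_color_def by blast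
    then obtain y where "(x, y) \<in> color_edges g S" using False by (metis converse_rtranclE)
    then show ?thesis using that by (auto simp: color_edges_def)
  qed
qed

lemma spanning_colors_lose_color:
  assumes S: "S \<subseteq> V" "v \<in> S" and span: "\<forall>g\<in>colors S. spanning_color g S"
    and lost: "h \<in> colors S" "h \<notin> colors (S - {v})"
    and g: "g \<in> colors S" "g \<noteq> h"
  shows False
proof -
  have h_at_v: "c x v = h" if x: "x \<in> S - {v}" for x
  proof -
    obtain y where y: "y \<in> S" "y \<noteq> x" "c x y = h"
      using spanning_color_edge_at[of h S x] span lost(1) x by blast
    have "y = v"
    proof (rule ccontr)
      assume "y \<noteq> v"
      then have "h \<in> colors (S - {v})" using x y unfolding colors_def by blast
      then show False using lost(2) by blast
    qed
    then show ?thesis using y by simp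
  qed
  obtain y where y: "y \<in> S" "y \<noteq> v" "c v y = g"
    using spanning_color_edge_at[of g S v] span g(1) S(2) by blast
  have "c y v = h" using h_at_v y by blast
  then show False using color_sym y S g(2) by (metis subsetD)
qed

lemma spanning_color_path_to_removed:
  assumes S: "S \<subseteq> V" "v \<in> S" and span: "spanning_color i S" and w: "w \<in> S - {v}"
  shows "\<exists>y\<in>S - {v}. c v y = i \<and> (w, y) \<in> color_reach i (S - {v})"
proof -
  have "(w, v) \<in> color_reach i S" using span w S(2) unfolding spanning_color_def by blast
  then obtain y where "y \<in> S - {v}" "(w, y) \<in> color_reach i (S - {v})" "c y v = i"
    using color_reach_last_edge[OF S(1)] w by blast
  then show ?thesis using color_sym S by (metis DiffE subsetD)
qed

lemma color_across_components:
  assumes S: "S \<subseteq> V" "v \<in> V" "v \<notin> S" and yz: "y \<in> S" "z \<in> S"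
    and i: "c v y = i" "c v z \<noteq> i" and not_reach: "(y, z) \<notin> color_reach i S"
  shows "c y z = c v z"
proof -
  have "y \<noteq> z" using not_reach by auto
  moreover have "c y z \<noteq> i" using yz not_reach calculation by (auto simp: color_edges_def)
  ultimately show ?thesis using third_side_color[of v y z] S yz i by auto
qed

lemma spanning_colors_keep_color:
  assumes S: "S \<subseteq> V" "v \<in> S" "finite S" and span: "\<forall>g\<in>colors S. spanning_color g S"
    and three: "3 \<le> card (colors S)" and i: "i \<in> colors S"
    and not_span: "\<not> spanning_color i (S - {v})"
  shows False
proof -
  define S' where "S' = S - {v}"
  have S': "S' \<subseteq> V" "v \<in> V" "v \<notin> S'" using S S'_def by auto
  have path_to_v: "\<exists>y\<in>S'. c v y = i \<and> (w, y) \<in> color_reach i S'" if "w \<in> S'" for w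
    using spanning_color_path_to_removed[OF S(1,2)] span i that S'_def by blast
  obtain g h where gh: "g \<in> colors S" "h \<in> colors S" "g \<noteq> i" "h \<noteq> i" "g \<noteq> h"
    using two_distinct_avoiding[OF finite_colors[OF S(3)] three] by blast
  obtain z where z: "z \<in> S'" "c v z = g"
    using spanning_color_edge_at[of g S v] span gh(1) S(2) S'_def by blast
  obtain z' where z': "z' \<in> S'" "c v z' = h"
    using spanning_color_edge_at[of h S v] span gh(2) S(2) S'_def by blast
  show False
  proof (cases "(z, z') \<in> color_reach i S'")
    case True
    obtain a b where ab: "a \<in> S'" "b \<in> S'" "(a, b) \<notin> color_reach i S'"
      using not_span unfolding spanning_color_def S'_def by blast
    have "(a, z) \<notin> color_reach i S' \<or> (b, z) \<notin> color_reach i S'"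
      using ab(3) color_reach_trans_sym[OF S'(1), of a z i b] by blast
    then obtain w where w: "w \<in> S'" "(w, z) \<notin> color_reach i S'" using ab(1,2) by blast
    obtain y where y: "y \<in> S'" "c v y = i" "(w, y) \<in> color_reach i S'" using path_to_v[OF w(1)] by blast
    have yz: "(y, z) \<notin> color_reach i S'" using w y by (meson rtrancl_trans)
    have yz': "(y, z') \<notin> color_reach i S'" using yz True color_reach_trans_sym[OF S'(1)] by blast
    have "c z y = c z' y"
      using color_const_on_component[OF S'(1) True y(1)] yz color_reach_sym[OF S'(1)] by blast
    moreover have "c y z = g" "c y z' = h"
      using color_across_components[OF S' y(1) z(1) y(2) _ yz] z(2) gh(3)
        color_across_components[OF S' y(1) z'(1) y(2) _ yz'] z'(2) gh(4) by simp_all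
    ultimately show False using gh(5) color_sym S'(1) y(1) z(1) z'(1) by (metis subsetD)
  next
    case False
    have across: "c u u' = c v u'" if u: "u \<in> S'" "u' \<in> S'" "(u, u') \<notin> color_reach i S'"
        "c v u' \<noteq> i" for u u'
    proof -
      obtain y where y: "y \<in> S'" "c v y = i" "(u, y) \<in> color_reach i S'" using path_to_v[OF u(1)] by blast
      have "(y, u') \<notin> color_reach i S'" using u(3) y(3) by (meson rtrancl_trans)
      then have "c y u' = c v u'" using color_across_components[OF S' y(1) u(2) y(2) u(4)] by blast
      then show ?thesis using color_const_on_component[OF S'(1) y(3) u(2,3)] by simp
    qed
    have "c z z' = h" using across[OF z(1) z'(1) False] z'(2) gh(4) by simp
    moreover have "c z' z = g"
      using across[OF z'(1) z(1)] z(2) gh(3) False color_reach_sym[OF S'(1)] by blast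
    ultimately show False using gh(5) color_sym S'(1) z(1) z'(1) by (metis subsetD)
  qed
qed

lemma exists_non_spanning_color:
  "finite S \<Longrightarrow> S \<subseteq> V \<Longrightarrow> 3 \<le> card (colors S) \<Longrightarrow> \<exists>i\<in>colors S. \<not> spanning_color i S"
proof (induction S rule: finite_psubset_induct)
  case (psubset S)
  show ?case
  proof (rule ccontr)
    assume "\<not> ?case"
    then have span: "\<forall>g\<in>colors S. spanning_color g S" by blast
    have "colors S \<noteq> {}" using psubset.prems(2) by (metis card.empty not_numeral_le_zero)
    then obtain v where v: "v \<in> S" unfolding colors_def by blast
    show False
    proof (cases "3 \<le> card (colors (S - {v}))")
      case True
      then obtain i where "i \<in> colors (S - {v})" "\<not> spanning_color i (S - {v})"
        using psubset.IH[of "S - {v}"] v psubset.prems(1) by blast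
      then show False
        using spanning_colors_keep_color[OF psubset.prems(1) v psubset.hyps span psubset.prems(2)]
          colors_mono[of "S - {v}" S] by blast
    next
      case False
      have "\<not> colors S \<subseteq> colors (S - {v})"
      proof
        assume "colors S \<subseteq> colors (S - {v})"
        then have "card (colors S) \<le> card (colors (S - {v}))"
          using finite_colors psubset.hyps by (simp add: card_mono)
        then show False using False psubset.prems(2) by simp
      qed
      then obtain h where "h \<in> colors S" "h \<notin> colors (S - {v})" by blast
      moreover obtain g where "g \<in> colors S" "g \<noteq> h"
        using two_distinct_avoiding[OF finite_colors[OF psubset.hyps] psubset.prems(2)] by blast
      ultimately show False
        using spanning_colors_lose_color[OF psubset.prems(1) v span] by blast
    qed
  qed
qed

definition gallai_partition :: "'a set \<Rightarrow> ('a \<Rightarrow> 'a set) \<Rightarrow> 'b \<Rightarrow> 'b \<Rightarrow> bool" where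
  "gallai_partition S part r b \<longleftrightarrow> S \<subseteq> V \<and> block_partition S part \<and>
     (\<forall>x\<in>S. \<forall>y\<in>S. y \<notin> part x \<longrightarrow> c x y = r \<or> c x y = b) \<and>
     (\<forall>x\<in>S. \<forall>z\<in>S. \<forall>x'\<in>part x. z \<notin> part x \<longrightarrow> c z x' = c z x)"

lemma gallai_partitionD:
  assumes "gallai_partition S part r b"
  shows "S \<subseteq> V" "block_partition S part"
    and "x \<in> S \<Longrightarrow> y \<in> S \<Longrightarrow> y \<notin> part x \<Longrightarrow> c x y = r \<or> c x y = b"
    and "x \<in> S \<Longrightarrow> z \<in> S \<Longrightarrow> x' \<in> part x \<Longrightarrow> z \<notin> part x \<Longrightarrow> c z x' = c z x"
  using assms unfolding gallai_partition_def by blast+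

lemma gallai_partition_swap: "gallai_partition S part r b \<Longrightarrow> gallai_partition S part b r"
  unfolding gallai_partition_def by blast

lemma gallai_partition_one_color:
  "gallai_partition S part r r \<Longrightarrow> gallai_partition S part r b"
  unfolding gallai_partition_def by blast

definition component :: "'b \<Rightarrow> 'a set \<Rightarrow> 'a \<Rightarrow> 'a set" where
  "component i S x = {y \<in> S. (x, y) \<in> color_reach i S}"

definition component_rep :: "'b \<Rightarrow> 'a set \<Rightarrow> 'a \<Rightarrow> 'a" where
  "component_rep i S x = (SOME y. y \<in> component i S x)"

lemma component_rep_reach:
  assumes "x \<in> S"
  shows "component_rep i S x \<in> S" "(x, component_rep i S x) \<in> color_reach i S"
proof -
  have "x \<in> component i S x" using assms unfolding component_def by simp
  then have "component_rep i S x \<in> component i S x" unfolding component_rep_def by (rule someI)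
  then show "component_rep i S x \<in> S" "(x, component_rep i S x) \<in> color_reach i S"
    unfolding component_def by auto
qed

lemma component_rep_eq_iff:
  assumes S: "S \<subseteq> V" and "x \<in> S" "y \<in> S"
  shows "component_rep i S x = component_rep i S y \<longleftrightarrow> (x, y) \<in> color_reach i S"
proof
  assume eq: "component_rep i S x = component_rep i S y"
  have "(x, component_rep i S x) \<in> color_reach i S" "(y, component_rep i S x) \<in> color_reach i S"
    using component_rep_reach(2)[OF assms(2), of i] component_rep_reach(2)[OF assms(3), of i] eq
    by simp_all
  then show "(x, y) \<in> color_reach i S" by (rule color_reach_trans_sym[OF S])
next
  assume xy: "(x, y) \<in> color_reach i S"
  have "component i S x = component i S y"
    unfolding component_def using xy color_reach_sym[OF S xy] by (meson rtrancl_trans)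
  then show "component_rep i S x = component_rep i S y" unfolding component_rep_def by simp
qed

lemma color_between_components:
  assumes S: "S \<subseteq> V" and xy: "x \<in> S" "y \<in> S" "(x, y) \<notin> color_reach i S"
  shows "c x y = c (component_rep i S x) (component_rep i S y)"
proof -
  let ?x = "component_rep i S x" and ?y = "component_rep i S y"
  have reps: "?x \<in> S" "?y \<in> S" "(x, ?x) \<in> color_reach i S" "(y, ?y) \<in> color_reach i S"
    using component_rep_reach xy by auto
  have "(y, ?x) \<notin> color_reach i S"
    using xy(3) reps(3) color_reach_trans_sym[OF S] by blast
  have "c x y = c ?x y" using color_const_on_component[OF S reps(3) xy(2,3)] .
  also have "\<dots> = c y ?x" using color_sym S reps(1) xy(2) by auto
  also have "\<dots> = c ?y ?x" using color_const_on_component[OF S reps(4) reps(1) \<open>(y, ?x) \<notin> _\<close>] .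
  also have "\<dots> = c ?x ?y" using color_sym S reps(1,2) by auto
  finally show ?thesis .
qed

lemma colors_component_reps:
  assumes S: "S \<subseteq> V"
  shows "colors (component_rep i S ` S) \<subseteq> colors S - {i}"
proof
  fix j assume "j \<in> colors (component_rep i S ` S)"
  then obtain x y where xy: "x \<in> S" "y \<in> S" "component_rep i S x \<noteq> component_rep i S y"
      "j = c (component_rep i S x) (component_rep i S y)"
    unfolding colors_def by blast
  have "(x, y) \<notin> color_reach i S" using xy component_rep_eq_iff[OF S] by blast
  then have "j = c x y" using color_between_components[OF S xy(1,2)] xy(4) by simp
  moreover have "x \<noteq> y" using xy(3) by blast
  moreover have "c x y \<noteq> i"
    using \<open>(x, y) \<notin> color_reach i S\<close> xy(1,2) calculation(2) by (auto simp: color_edges_def)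
  ultimately show "j \<in> colors S - {i}" using xy(1,2) unfolding colors_def by blast
qed

lemma gallai_partition_lift:
  assumes S: "S \<subseteq> V" and P: "gallai_partition (component_rep i S ` S) part r b"
  shows "gallai_partition S (\<lambda>x. {y \<in> S. component_rep i S y \<in> part (component_rep i S x)}) r b"
proof -
  let ?rep = "component_rep i S" and ?T = "component_rep i S ` S"
  let ?part = "\<lambda>x. {y \<in> S. ?rep y \<in> part (?rep x)}"
  have B: "block_partition ?T part" using P unfolding gallai_partition_def by blast
  have repT: "?rep x \<in> ?T" if "x \<in> S" for x using that by blast
  have cross: "c x y = c (?rep x) (?rep y)" if "x \<in> S" "y \<in> S" "?rep y \<notin> part (?rep x)" for x y
  proof -
    have "?rep y \<noteq> ?rep x" using that B repT unfolding block_partition_def by metis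
    then have "(x, y) \<notin> color_reach i S" using component_rep_eq_iff[OF S that(1,2), of i] by auto
    then show ?thesis using color_between_components[OF S that(1,2)] by simp
  qed
  have "block_partition S ?part"
    unfolding block_partition_def
  proof (intro ballI conjI)
    fix x assume x: "x \<in> S"
    show "x \<in> ?part x" using x B repT unfolding block_partition_def by blast
    show "?part x \<subseteq> S" by blast
    fix y assume "y \<in> ?part x"
    then have "part (?rep y) = part (?rep x)" using B repT x unfolding block_partition_def by blast
    then show "?part y = ?part x" by simp
  qed
  moreover have "c x y = r \<or> c x y = b" if "x \<in> S" "y \<in> S" "y \<notin> ?part x" for x y
    using that cross P repT unfolding gallai_partition_def by auto
  moreover have "c z x' = c z x" if xz: "x \<in> S" "z \<in> S" "x' \<in> ?part x" "z \<notin> ?part x" for x z x'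
  proof -
    have x': "x' \<in> S" "?rep x' \<in> part (?rep x)" using xz(3) by auto
    have z: "?rep z \<notin> part (?rep x)" using xz by blast
    have "part (?rep x') = part (?rep x)" using B x' repT xz(1) unfolding block_partition_def by blast
    then have "?rep x' \<notin> part (?rep z)" "?rep x \<notin> part (?rep z)"
      using block_partition_sym[OF B] repT x'(1) xz(1,2) z by metis+
    then have "c z x' = c (?rep z) (?rep x')" "c z x = c (?rep z) (?rep x)"
      using cross x'(1) xz(1,2) by auto
    moreover have "c (?rep z) (?rep x') = c (?rep z) (?rep x)"
      using P repT xz(1,2) x'(2) z unfolding gallai_partition_def by blast
    ultimately show ?thesis by simp
  qed
  ultimately show ?thesis using S unfolding gallai_partition_def by blast
qed

lemma gallai_partition_singletons:
  assumes "S \<subseteq> V" "colors S \<subseteq> {r, b}"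
  shows "gallai_partition S (\<lambda>x. {x}) r b"
proof -
  have "c x y = r \<or> c x y = b" if "x \<in> S" "y \<in> S" "x \<noteq> y" for x y
    using assms(2) that unfolding colors_def by blast
  then show ?thesis using assms(1) unfolding gallai_partition_def block_partition_def by auto
qed

theorem exists_gallai_partition:
  "finite S \<Longrightarrow> S \<subseteq> V \<Longrightarrow> 2 \<le> card S \<Longrightarrow>
     \<exists>part r b. gallai_partition S part r b \<and> (\<exists>x\<in>S. \<exists>y\<in>S. y \<notin> part x)"
proof (induction "card (colors S)" arbitrary: S rule: less_induct)
  case less
  note S = less.prems(2)
  show ?case
  proof (cases "card (colors S) \<le> 2")
    case True
    obtain r b where "colors S \<subseteq> {r, b}"
      using subset_doubleton_of_card_le_2[OF finite_colors[OF less.prems(1)] True] by blast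
    then have "gallai_partition S (\<lambda>x. {x}) r b" by (rule gallai_partition_singletons[OF S])
    moreover have "\<not> card S \<le> Suc 0" using less.prems(3) by simp
    then obtain x y where "x \<in> S" "y \<in> S" "x \<noteq> y"
      using less.prems(1) card_le_Suc0_iff_eq[of S] by blast
    ultimately show ?thesis by blast
  next
    case False
    then obtain i where i: "i \<in> colors S" "\<not> spanning_color i S"
      using exists_non_spanning_color[OF less.prems(1) S] by force
    then obtain x y where xy: "x \<in> S" "y \<in> S" "(x, y) \<notin> color_reach i S"
      unfolding spanning_color_def by blast
    let ?rep = "component_rep i S"
    let ?T = "?rep ` S"
    have T: "finite ?T" "?T \<subseteq> V" using less.prems(1) S component_rep_reach(1) by auto
    have "?rep x \<noteq> ?rep y" using component_rep_eq_iff[OF S xy(1,2)] xy(3) by simp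
    then have "card {?rep x, ?rep y} = 2" by simp
    then have "2 \<le> card ?T" using xy(1,2) card_mono[OF T(1), of "{?rep x, ?rep y}"] by simp
    moreover have "colors ?T \<subset> colors S" using colors_component_reps[OF S, of i] i(1) by blast
    then have "card (colors ?T) < card (colors S)"
      using finite_colors[OF less.prems(1)] by (rule psubset_card_mono[rotated])
    ultimately obtain part r b where P: "gallai_partition ?T part r b"
        and two: "\<exists>x\<in>?T. \<exists>y\<in>?T. y \<notin> part x"
      using less.hyps[OF _ T(1,2)] by blast
    have "\<exists>x\<in>S. \<exists>y\<in>S. y \<notin> {z \<in> S. ?rep z \<in> part (?rep x)}" using two by blast
    then show ?thesis using gallai_partition_lift[OF S P] by blast
  qed
qed
end

section \<open>Colorings without a monochromatic double star\<close>

lemma obtain_disjoint_subsets: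
  assumes fin: "finite U" "finite W"
    and cards: "n \<le> card U" "m \<le> card W" "n + m \<le> card (U \<union> W)"
  obtains A B where "A \<subseteq> U" "B \<subseteq> W" "A \<inter> B = {}" "card A = n" "card B = m"
proof (cases "m \<le> card (W - U)")
  case True
  obtain B where "B \<subseteq> W - U" "card B = m" using True by (rule obtain_subset_with_card_n)
  moreover obtain A where "A \<subseteq> U" "card A = n" using cards(1) by (rule obtain_subset_with_card_n)
  ultimately show thesis using that by blast
next
  case False
  txt \<open>Take all of W - U for B and complete it from W \<inter> U; A is then chosen from what remains of U.\<close>
  have union: "card (U \<union> W) = card U + card (W - U)"
    using fin card_Un_disjoint[of U "W - U"] by (simp add: Un_Diff_cancel)
  have "card W = card (W - U) + card (W \<inter> U)"
    using fin card_Un_disjoint[of "W - U" "W \<inter> U"] by (metis Diff_disjoint Int_Diff_disjoint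
      Un_Diff_Int finite_Diff finite_Int inf_commute)
  then have "m - card (W - U) \<le> card (W \<inter> U)" using cards(2) by linarith
  then obtain B1 where B1: "B1 \<subseteq> W \<inter> U" "card B1 = m - card (W - U)"
    by (rule obtain_subset_with_card_n)
  have "finite B1" using B1(1) fin by (meson finite_Int finite_subset)
  then have "card (U - B1) = card U - card B1" using B1(1) by (simp add: card_Diff_subset)
  then have "n \<le> card (U - B1)" using union cards(3) B1(2) False by linarith
  then obtain A where A: "A \<subseteq> U - B1" "card A = n" by (rule obtain_subset_with_card_n)
  have "card ((W - U) \<union> B1) = m"
    using B1 \<open>finite B1\<close> fin False by (subst card_Un_disjoint) auto
  moreover have "(W - U) \<union> B1 \<subseteq> W" "A \<inter> ((W - U) \<union> B1) = {}" using A(1) B1(1) by auto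
  ultimately show thesis using that[of A "(W - U) \<union> B1"] A by auto
qed

locale double_star_free = gallai_coloring "{..<N}" c for N :: nat and c :: "nat \<Rightarrow> nat \<Rightarrow> nat" +
  fixes n m :: nat
  assumes no_double_star: "\<not> mono_double_star N c n m"
begin

lemma no_double_star_leaf_sets:
  assumes uv: "u < N" "v < N" "u \<noteq> v" "c u v = i"
    and U: "U \<subseteq> {x. x < N \<and> x \<noteq> u \<and> x \<noteq> v \<and> c u x = i}"
    and W: "W \<subseteq> {x. x < N \<and> x \<noteq> u \<and> x \<noteq> v \<and> c v x = i}"
    and cards: "n \<le> card U" "m \<le> card W" "n + m \<le> card (U \<union> W)"
  shows False
proof -
  have "finite U" "finite W" using U W by (auto intro: finite_subset[of _ "{..<N}"])
  then obtain A B where AB: "A \<subseteq> U" "B \<subseteq> W" "A \<inter> B = {}" "card A = n" "card B = m"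
    using cards by (rule obtain_disjoint_subsets)
  have "A \<subseteq> {0..<N} - {u, v}" "B \<subseteq> {0..<N} - {u, v}"
    "\<forall>a\<in>A. c u a = c u v" "\<forall>b\<in>B. c v b = c u v"
    using AB(1,2) U W uv(4) by auto
  then have "mono_double_star N c n m"
    unfolding mono_double_star_def using uv(1-3) AB(3-5) by blast
  then show False using no_double_star by blast
qed

definition nbhd :: "nat \<Rightarrow> nat set \<Rightarrow> nat \<Rightarrow> nat set" where
  "nbhd i Q x = {y \<in> Q. y \<noteq> x \<and> c x y = i}"

abbreviation deg :: "nat \<Rightarrow> nat set \<Rightarrow> nat \<Rightarrow> nat" where
  "deg i Q x \<equiv> card (nbhd i Q x)"

lemma finite_nbhd: "Q \<subseteq> {..<N} \<Longrightarrow> finite (nbhd i Q x)"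
  unfolding nbhd_def by (rule finite_subset[of _ "{..<N}"]) auto

lemma deg_le_near_high_deg:
  assumes Q: "Q \<subseteq> {..<N}" and x: "x \<in> Q" and high: "n + m + 1 \<le> deg i Q x"
    and y: "y \<in> nbhd i Q x"
  shows "deg i Q y \<le> m"
proof (rule ccontr)
  assume low: "\<not> deg i Q y \<le> m"
  have y': "y \<in> Q" "y \<noteq> x" "c x y = i" using y nbhd_def by auto
  have N: "x < N" "y < N" using Q x y'(1) by auto
  let ?U = "nbhd i Q x - {y}" and ?W = "nbhd i Q y - {x}"
  have "?U \<subseteq> {z. z < N \<and> z \<noteq> x \<and> z \<noteq> y \<and> c x z = i}"
    using Q unfolding nbhd_def by auto
  moreover have "?W \<subseteq> {z. z < N \<and> z \<noteq> x \<and> z \<noteq> y \<and> c y z = i}"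
    using Q unfolding nbhd_def by auto
  moreover have "card ?U = deg i Q x - 1" using y finite_nbhd[OF Q] by simp
  moreover have "deg i Q y - 1 \<le> card ?W" using diff_card_le_card_Diff[of "{x}" "nbhd i Q y"] by simp
  moreover have "card ?U \<le> card (?U \<union> ?W)" using finite_nbhd[OF Q] by (simp add: card_mono)
  ultimately show False
    using no_double_star_leaf_sets[OF N y'(2)[symmetric] y'(3), of ?U ?W] high low by linarith
qed

text \<open>Double counting the j-edges between the vertices of low i-degree and those of low
  j-degree: each of the former has at least D - m such edges, each of the latter at most m.\<close>

lemma low_deg_double_count:
  assumes Q: "Q \<subseteq> {..<N}"
    and sum: "\<forall>x\<in>Q. D \<le> deg i Q x + deg j Q x" and D: "n + 2 * m + 1 \<le> D"
  shows "card {x\<in>Q. deg i Q x \<le> m} * (D - m) \<le> card {x\<in>Q. deg j Q x \<le> m} * m"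
proof -
  define Li where "Li = {x\<in>Q. deg i Q x \<le> m}"
  define Lj where "Lj = {x\<in>Q. deg j Q x \<le> m}"
  have fin: "finite Li" "finite Lj" using Q Li_def Lj_def by (auto intro: finite_subset[of _ "{..<N}"])
  let ?E = "\<lambda>y z. z \<noteq> y \<and> c y z = j"
  have nbhd_Li: "{z\<in>Lj. ?E y z} = nbhd j Q y" "D - m \<le> deg j Q y" if "y \<in> Li" for y
  proof -
    have high: "n + m + 1 \<le> deg j Q y" using sum that Li_def D by fastforce
    have "nbhd j Q y \<subseteq> Lj"
      using deg_le_near_high_deg[OF Q _ high] that unfolding Li_def Lj_def nbhd_def by auto
    then show "{z\<in>Lj. ?E y z} = nbhd j Q y" using Lj_def nbhd_def by auto
    show "D - m \<le> deg j Q y" using sum that Li_def by fastforce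
  qed
  have nbhd_Lj: "card {y\<in>Li. ?E y z} \<le> m" if "z \<in> Lj" for z
  proof -
    have "{y\<in>Li. ?E y z} \<subseteq> nbhd j Q z"
      using that Li_def Lj_def nbhd_def color_sym Q by (auto simp: subset_iff)
    then show ?thesis using finite_nbhd[OF Q] card_mono order_trans that Lj_def by blast
  qed
  have "card Li * (D - m) \<le> (\<Sum>y\<in>Li. card {z\<in>Lj. ?E y z})"
    using sum_bounded_below[of Li "D - m" "\<lambda>y. card {z\<in>Lj. ?E y z}"] nbhd_Li by simp
  also have "\<dots> = (\<Sum>z\<in>Lj. card {y\<in>Li. ?E y z})"
    using sum.swap_restrict[OF fin, of "\<lambda>_ _. 1::nat" ?E] by simp
  also have "\<dots> \<le> card Lj * m"
    using sum_bounded_above[of Lj "\<lambda>z. card {y\<in>Li. ?E y z}" m] nbhd_Lj by simp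
  finally show ?thesis unfolding Li_def Lj_def .
qed

lemma two_color_dense_contra:
  assumes Q: "Q \<subseteq> {..<N}" "Q \<noteq> {}"
    and dense: "\<forall>x\<in>Q. 2 * n + 2 * m + 1 \<le> deg r Q x + deg b Q x"
  shows False
proof -
  define D where "D = 2 * n + 2 * m + 1"
  define lr where "lr = card {x\<in>Q. deg r Q x \<le> m}"
  define lb where "lb = card {x\<in>Q. deg b Q x \<le> m}"
  have "lr * (D - m) \<le> lb * m" "lb * (D - m) \<le> lr * m"
    using low_deg_double_count[OF Q(1), of D r b] low_deg_double_count[OF Q(1), of D b r] dense
    unfolding lr_def lb_def D_def by (auto simp: add.commute)
  then have "(lr + lb) * (D - m) \<le> (lr + lb) * m" by (simp add: algebra_simps)
  moreover have "lr + lb > 0"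
  proof -
    obtain x where x: "x \<in> Q" using Q(2) by blast
    have "2 * n + 2 * m + 1 \<le> deg r Q x + deg b Q x" using dense x by blast
    then have "n + m + 1 \<le> deg r Q x \<or> n + m + 1 \<le> deg b Q x" by linarith
    then obtain i where i: "i = r \<or> i = b" "n + m + 1 \<le> deg i Q x" by blast
    then obtain y where y: "y \<in> nbhd i Q x" by fastforce
    then have "y \<in> {x\<in>Q. deg i Q x \<le> m}"
      using deg_le_near_high_deg[OF Q(1) x i(2) y] unfolding nbhd_def by auto
    moreover have "finite Q" using Q(1) by (rule finite_subset) simp
    ultimately show ?thesis using i(1) unfolding lr_def lb_def by (auto simp: card_gt_0_iff)
  qed
  ultimately have "D - m \<le> m" by (auto simp: mult_le_cancel1)
  then show False unfolding D_def by simp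
qed

definition cross_nbhd :: "nat set \<Rightarrow> (nat \<Rightarrow> nat set) \<Rightarrow> nat \<Rightarrow> nat \<Rightarrow> nat set" where
  "cross_nbhd Q part k x = {y \<in> Q - part x. c x y = k}"

definition cross_rich :: "nat set \<Rightarrow> (nat \<Rightarrow> nat set) \<Rightarrow> nat \<Rightarrow> nat \<Rightarrow> bool" where
  "cross_rich Q part k x \<longleftrightarrow>
     n + 1 \<le> card (cross_nbhd Q part k x) \<and> n + m + 2 \<le> card (cross_nbhd Q part k x) + card (part x)"

context
  fixes Q part i j
  assumes P: "gallai_partition Q part i j"
begin

lemma finite_partitioned: "finite Q"
  using gallai_partitionD(1)[OF P] by (rule finite_subset) simp

lemma finite_cross_nbhd: "finite (cross_nbhd Q part k x)"
  using finite_partitioned unfolding cross_nbhd_def by simp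

lemma mem_own_block: "x \<in> Q \<Longrightarrow> x \<in> part x"
  using gallai_partitionD(2)[OF P] unfolding block_partition_def by blast

lemma block_subset: "x \<in> Q \<Longrightarrow> part x \<subseteq> Q"
  using gallai_partitionD(2)[OF P] unfolding block_partition_def by blast

lemma finite_block: "x \<in> Q \<Longrightarrow> finite (part x)"
  using block_subset finite_partitioned finite_subset by blast

lemma card_block_pos: "x \<in> Q \<Longrightarrow> 1 \<le> card (part x)"
  using mem_own_block finite_block by (metis One_nat_def Suc_leI card_gt_0_iff empty_iff)

lemma card_block_less:
  assumes nontrivial: "\<exists>x\<in>Q. \<exists>y\<in>Q. y \<notin> part x" and x: "x \<in> Q"
  shows "card (part x) < card Q"
proof -
  have "part x \<noteq> Q"
  proof
    assume all: "part x = Q"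
    obtain x0 y0 where xy0: "x0 \<in> Q" "y0 \<in> Q" "y0 \<notin> part x0" using nontrivial by blast
    have "part x0 = part x"
      using gallai_partitionD(2)[OF P] x xy0(1) all unfolding block_partition_def by blast
    then show False using xy0 all by simp
  qed
  then show ?thesis using block_subset[OF x] finite_partitioned by (simp add: psubset_card_mono)
qed

lemma card_le_cross_nbhds:
  assumes x: "x \<in> Q"
  shows "card Q \<le> card (cross_nbhd Q part i x) + card (cross_nbhd Q part j x) + card (part x)"
proof -
  have "Q \<subseteq> cross_nbhd Q part i x \<union> cross_nbhd Q part j x \<union> part x"
    using gallai_partitionD(3)[OF P x] unfolding cross_nbhd_def by blast
  then have "card Q \<le> card (cross_nbhd Q part i x \<union> cross_nbhd Q part j x \<union> part x)"
    using finite_cross_nbhd finite_block[OF x] by (simp add: card_mono)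
  also have "\<dots> \<le> card (cross_nbhd Q part i x) + card (cross_nbhd Q part j x) + card (part x)"
    by (meson add_le_mono card_Un_le le_refl order_trans)
  finally show ?thesis .
qed

lemma cross_nbhd_sym:
  assumes x: "x \<in> Q" and y: "y \<in> cross_nbhd Q part k x"
  shows "x \<in> cross_nbhd Q part k y"
proof -
  have y': "y \<in> Q" "y \<notin> part x" "c x y = k" using y cross_nbhd_def by auto
  have "x \<notin> part y" using block_partition_sym[OF gallai_partitionD(2)[OF P] x y'(1,2)] .
  moreover have "c y x = k" using color_sym y' x gallai_partitionD(1)[OF P] by auto
  ultimately show ?thesis using x unfolding cross_nbhd_def by blast
qed

lemma block_subset_cross_nbhd:
  assumes x: "x \<in> Q" and y: "y \<in> cross_nbhd Q part k x"
  shows "part y \<subseteq> cross_nbhd Q part k x"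
proof
  fix y' assume y'': "y' \<in> part y"
  have y': "y \<in> Q" "y \<notin> part x" "c x y = k" using y cross_nbhd_def by auto
  have B: "block_partition Q part" using gallai_partitionD(2)[OF P] .
  have "y' \<in> Q" using block_subset[OF y'(1)] y'' by blast
  moreover have "y' \<notin> part x" using block_partition_disjoint[OF B x y'(1,2)] y'' by blast
  moreover have "c x y' = c x y"
    using gallai_partitionD(4)[OF P y'(1) x y''] block_partition_sym[OF B x y'(1,2)] .
  ultimately show "y' \<in> cross_nbhd Q part k x" using y' unfolding cross_nbhd_def by simp
qed

text \<open>Otherwise x, with leaves from its k-cross-neighbourhood and its own block, and y, with
  leaves from its k-cross-neighbourhood, centre a monochromatic S(n,m).\<close>

lemma cross_nbhd_small_near_rich:
  assumes x: "x \<in> Q" and rich: "cross_rich Q part k x" and y: "y \<in> cross_nbhd Q part k x"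
  shows "card (cross_nbhd Q part k y) \<le> m"
proof (rule ccontr)
  assume big: "\<not> ?thesis"
  have QN: "Q \<subseteq> {..<N}" using gallai_partitionD(1)[OF P] .
  have y': "y \<in> Q" "y \<notin> part x" "c x y = k" using y cross_nbhd_def by auto
  have xy: "x \<noteq> y" using mem_own_block[OF x] y'(2) by blast
  have N: "x < N" "y < N" using QN x y' by auto
  let ?U = "cross_nbhd Q part k x - {y}" and ?W = "cross_nbhd Q part k y - {x}"
  have U: "?U \<subseteq> {z. z < N \<and> z \<noteq> x \<and> z \<noteq> y \<and> c x z = k}"
    using QN mem_own_block[OF x] unfolding cross_nbhd_def by auto
  have W: "?W \<subseteq> {z. z < N \<and> z \<noteq> x \<and> z \<noteq> y \<and> c y z = k}"
    using QN mem_own_block[OF y'(1)] unfolding cross_nbhd_def by auto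
  have cU: "card ?U = card (cross_nbhd Q part k x) - 1" using y finite_cross_nbhd by simp
  have "card (cross_nbhd Q part k y) - 1 \<le> card ?W"
    using diff_card_le_card_Diff[of "{x}" "cross_nbhd Q part k y"] by simp
  then have cW: "m \<le> card ?W" using big by linarith
  have "?U \<union> (part x - {x}) \<subseteq> ?U \<union> ?W"
    using block_subset_cross_nbhd[OF y'(1) cross_nbhd_sym[OF x y]] by blast
  moreover have "card (?U \<union> (part x - {x})) = card ?U + (card (part x) - 1)"
    using finite_cross_nbhd finite_block[OF x] mem_own_block[OF x]
    by (subst card_Un_disjoint) (auto simp: cross_nbhd_def)
  ultimately have "card ?U + (card (part x) - 1) \<le> card (?U \<union> ?W)"
    using finite_cross_nbhd by (metis card_mono finite_Diff finite_UnI)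
  then have "n + m \<le> card (?U \<union> ?W)"
    using cU rich card_block_pos[OF x] unfolding cross_rich_def by linarith
  moreover have "n \<le> card ?U" using cU rich unfolding cross_rich_def by linarith
  ultimately show False using no_double_star_leaf_sets[OF N xy y'(3) U W _ cW] by blast
qed

lemma cross_nbhd_le_of_large_block:
  assumes x: "x \<in> Q" and large: "m + 1 \<le> card (part x)"
  shows "card (cross_nbhd Q part k x) \<le> n"
proof (rule ccontr)
  assume "\<not> ?thesis"
  then have rich: "cross_rich Q part k x" using large unfolding cross_rich_def by simp
  then obtain y where y: "y \<in> cross_nbhd Q part k x" unfolding cross_rich_def by fastforce
  have "y \<in> Q" using y cross_nbhd_def by auto
  then have "part x \<subseteq> cross_nbhd Q part k y"
    using block_subset_cross_nbhd cross_nbhd_sym[OF x y] by blast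
  then have "card (part x) \<le> card (cross_nbhd Q part k y)" using finite_cross_nbhd by (simp add: card_mono)
  then show False using cross_nbhd_small_near_rich[OF x rich y] large by linarith
qed

end

lemma block_small_of_cross_nbhd_small:
  assumes P: "gallai_partition Q part i j" and x: "x \<in> Q"
    and small: "card (cross_nbhd Q part i x) \<le> m" "card (part x) \<le> n + m"
    and Q: "2 * n + 2 * m + 1 \<le> card Q"
  shows "card (part x) \<le> m"
proof (rule ccontr)
  assume "\<not> ?thesis"
  moreover have "n + 1 \<le> card (cross_nbhd Q part j x)"
    using card_le_cross_nbhds[OF P x] small Q by linarith
  ultimately show False using cross_nbhd_le_of_large_block[OF P x, of j] by linarith
qed

lemma cross_rich_of_cross_nbhd_small:
  assumes P: "gallai_partition Q part i j" and blocks: "\<forall>x\<in>Q. card (part x) \<le> n + m"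
    and mn: "m \<le> n" and Q: "2 * n + 2 * m + 1 \<le> card Q"
    and y: "y \<in> Q" and small: "card (cross_nbhd Q part i y) \<le> m"
  shows "card (part y) \<le> m" "card Q - 2 * m \<le> card (cross_nbhd Q part j y)"
    "cross_rich Q part j y"
proof -
  show block: "card (part y) \<le> m"
    using block_small_of_cross_nbhd_small[OF P y small] blocks y Q by blast
  then show "card Q - 2 * m \<le> card (cross_nbhd Q part j y)"
    using card_le_cross_nbhds[OF P y] small by linarith
  then show "cross_rich Q part j y"
    using card_block_pos[OF P y] Q mn unfolding cross_rich_def by linarith
qed

text \<open>From the i-rich vertex x step in color i to a j-rich vertex v and then in color j to an
  i-rich vertex z. The large i-cross-neighbourhood of z lies in the block of v and the
  i-cross-neighbourhood of v, both of size at most m.\<close>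

lemma small_block_contra:
  assumes P: "gallai_partition Q part i j" and blocks: "\<forall>x\<in>Q. card (part x) \<le> n + m"
    and mn: "m \<le> n" and Q1: "2 * n + 2 * m + 3 \<le> card Q" and Q2: "4 * m + 1 \<le> card Q"
    and x: "x \<in> Q" and small: "card (part x) \<le> m"
    and ge: "card (cross_nbhd Q part j x) \<le> card (cross_nbhd Q part i x)"
  shows False
proof -
  have P': "gallai_partition Q part j i" using gallai_partition_swap[OF P] .
  have Q1': "2 * n + 2 * m + 1 \<le> card Q" using Q1 by linarith
  have "cross_rich Q part i x"
    using card_le_cross_nbhds[OF P x] card_block_pos[OF P x] small ge Q1 unfolding cross_rich_def
    by linarith
  then obtain v where v: "v \<in> cross_nbhd Q part i x" "card (cross_nbhd Q part i v) \<le> m"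
    using cross_nbhd_small_near_rich[OF P x] unfolding cross_rich_def by fastforce
  have vQ: "v \<in> Q" using v cross_nbhd_def by auto
  note v_props = cross_rich_of_cross_nbhd_small[OF P blocks mn Q1' vQ v(2)]
  then obtain z where z: "z \<in> cross_nbhd Q part j v" "card (cross_nbhd Q part j z) \<le> m"
    using cross_nbhd_small_near_rich[OF P vQ] unfolding cross_rich_def by fastforce
  have zQ: "z \<in> Q" using z cross_nbhd_def by auto
  note z_props = cross_rich_of_cross_nbhd_small[OF P' blocks mn Q1' zQ z(2)]
  have "cross_nbhd Q part i z \<subseteq> part v \<union> cross_nbhd Q part i v"
  proof
    fix y assume y: "y \<in> cross_nbhd Q part i z"
    have yQ: "y \<in> Q" using y cross_nbhd_def by auto
    have yi: "card (cross_nbhd Q part i y) \<le> m"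
      using cross_nbhd_small_near_rich[OF P zQ z_props(3) y] .
    show "y \<in> part v \<union> cross_nbhd Q part i v"
    proof (rule ccontr)
      assume out: "y \<notin> part v \<union> cross_nbhd Q part i v"
      then have "c v y = j" using gallai_partitionD(3)[OF P vQ yQ] yQ unfolding cross_nbhd_def by auto
      then have "y \<in> cross_nbhd Q part j v" using out yQ unfolding cross_nbhd_def by blast
      then have "card (cross_nbhd Q part j y) \<le> m"
        using cross_nbhd_small_near_rich[OF P vQ v_props(3)] by blast
      moreover have "card (part y) \<le> m"
        using cross_rich_of_cross_nbhd_small(1)[OF P blocks mn Q1' yQ yi] .
      ultimately show False using card_le_cross_nbhds[OF P yQ] yi Q2 by linarith
    qed
  qed
  then have "card (cross_nbhd Q part i z) \<le> card (part v) + card (cross_nbhd Q part i v)"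
    using finite_block[OF P vQ] finite_cross_nbhd[OF P] card_Un_le
    by (metis card_mono finite_UnI order_trans)
  then show False using v(2) v_props(1) z_props(2) Q2 by linarith
qed

lemma two_blocks_card_le_of_color:
  assumes P: "gallai_partition Q part k k'"
    and bounded: "\<forall>z\<in>Q. card (cross_nbhd Q part k z) \<le> n \<and> card (cross_nbhd Q part k' z) \<le> n"
    and Q: "2 * n < card Q" and xy: "x \<in> Q" "y \<in> Q" "y \<notin> part x" and k: "c x y = k"
  shows "card (part x) + card (part y) \<le> n"
proof -
  have B: "block_partition Q part" using gallai_partitionD(2)[OF P] .
  have ycn: "y \<in> cross_nbhd Q part k x" using xy k cross_nbhd_def by auto
  have xcn: "x \<in> cross_nbhd Q part k y" using cross_nbhd_sym[OF P xy(1) ycn] .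
  have "\<not> Q \<subseteq> cross_nbhd Q part k x \<union> cross_nbhd Q part k y"
  proof
    assume "Q \<subseteq> cross_nbhd Q part k x \<union> cross_nbhd Q part k y"
    then have "card Q \<le> card (cross_nbhd Q part k x) + card (cross_nbhd Q part k y)"
      using finite_cross_nbhd[OF P] card_Un_le by (metis card_mono finite_UnI order_trans)
    moreover have "card (cross_nbhd Q part k x) \<le> n" "card (cross_nbhd Q part k y) \<le> n"
      using bounded xy(1,2) by blast+
    ultimately show False using Q by linarith
  qed
  then obtain z where z: "z \<in> Q" "z \<notin> cross_nbhd Q part k x" "z \<notin> cross_nbhd Q part k y" by blast
  have "z \<notin> part x" "z \<notin> part y"
    using z block_subset_cross_nbhd[OF P xy(1) ycn] block_subset_cross_nbhd[OF P xy(2) xcn] by blast+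
  then have "x \<notin> part z" "y \<notin> part z" using block_partition_sym[OF B] z(1) xy(1,2) by blast+
  moreover have "c z x \<noteq> k" "c z y \<noteq> k"
    using z xy color_sym gallai_partitionD(1)[OF P] \<open>z \<notin> part x\<close> \<open>z \<notin> part y\<close>
    unfolding cross_nbhd_def by (auto simp: subset_iff)
  ultimately have "x \<in> cross_nbhd Q part k' z" "y \<in> cross_nbhd Q part k' z"
    using gallai_partitionD(3)[OF P z(1)] xy(1,2) unfolding cross_nbhd_def by auto
  then have "part x \<union> part y \<subseteq> cross_nbhd Q part k' z"
    using block_subset_cross_nbhd[OF P z(1)] by blast
  then have "card (part x \<union> part y) \<le> n"
    using finite_cross_nbhd[OF P] bounded z(1) by (meson card_mono order_trans)
  then show ?thesis
    using block_partition_disjoint[OF B xy] finite_block[OF P] xy(1,2) by (simp add: card_Un_disjoint)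
qed

lemma two_blocks_card_le:
  assumes P: "gallai_partition Q part i j"
    and bounded: "\<forall>z\<in>Q. card (cross_nbhd Q part i z) \<le> n \<and> card (cross_nbhd Q part j z) \<le> n"
    and Q: "2 * n < card Q" and xy: "x \<in> Q" "y \<in> Q" "y \<notin> part x"
  shows "card (part x) + card (part y) \<le> n"
proof (cases "c x y = i")
  case True
  then show ?thesis using two_blocks_card_le_of_color[OF P bounded Q xy] by blast
next
  case False
  then have "c x y = j" using gallai_partitionD(3)[OF P xy] by blast
  moreover have "\<forall>z\<in>Q. card (cross_nbhd Q part j z) \<le> n \<and> card (cross_nbhd Q part i z) \<le> n"
    using bounded by blast
  ultimately show ?thesis using two_blocks_card_le_of_color[OF gallai_partition_swap[OF P] _ Q xy] by blast
qed

lemma odd_cross_nbhd_has_larger_block: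
  assumes P: "gallai_partition Q part k k'" and a: "a \<in> Q"
    and card_a: "card (cross_nbhd Q part k a) = 2 * p + 1" and p: "2 \<le> p"
    and blocks: "\<forall>y\<in>cross_nbhd Q part k a. card (part y) = p \<or> card (part y) = p + 1"
  shows "\<exists>y\<in>cross_nbhd Q part k a. card (part y) = p + 1"
proof (rule ccontr)
  let ?X = "cross_nbhd Q part k a"
  assume "\<not> ?thesis"
  then have all_p: "card (part y) = p" if "y \<in> ?X" for y using blocks that by blast
  have B: "block_partition Q part" using gallai_partitionD(2)[OF P] .
  have fin: "finite ?X" using finite_cross_nbhd[OF P] .
  have sub: "part y \<subseteq> ?X" if "y \<in> ?X" for y using block_subset_cross_nbhd[OF P a that] .
  have disj: "part y \<inter> part z = {}" if "y \<in> ?X" "z \<in> ?X" "z \<notin> part y" for y z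
    using block_partition_disjoint[OF B] that unfolding cross_nbhd_def by blast
  txt \<open>Removing two of the disjoint blocks of size p from X leaves a single vertex,
    which cannot contain a third block.\<close>
  have "?X \<noteq> {}" using card_a by auto
  then obtain y1 where y1: "y1 \<in> ?X" by blast
  have c1: "card (?X - part y1) = p + 1"
    using card_Diff_subset[OF finite_subset[OF sub[OF y1] fin] sub[OF y1]] all_p[OF y1] card_a by simp
  then obtain y2 where y2: "y2 \<in> ?X - part y1" by (metis card.empty add_is_0 ex_in_conv one_neq_zero)
  have "part y2 \<subseteq> ?X - part y1" using sub disj y1 y2 by blast
  then have "card (?X - part y1 - part y2) = 1"
    using card_Diff_subset[OF finite_subset[OF _ fin]] all_p y2 c1 by (simp add: subset_iff)
  then obtain y3 where y3: "?X - part y1 - part y2 = {y3}" by (rule card_1_singletonE)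
  then have "y3 \<in> ?X" "y3 \<notin> part y1" "y3 \<notin> part y2" by auto
  then have "part y3 \<subseteq> ?X" "part y1 \<inter> part y3 = {}" "part y2 \<inter> part y3 = {}"
    using sub disj y1 y2 by auto
  then have "part y3 \<subseteq> {y3}" unfolding y3[symmetric] by blast
  then have "card (part y3) \<le> 1" using card_mono[of "{y3}" "part y3"] by simp
  then show False using all_p[OF \<open>y3 \<in> ?X\<close>] p by linarith
qed

lemma large_blocks_odd_contra:
  assumes P: "gallai_partition Q part i j" and ij: "i \<noteq> j"
    and bounded: "\<forall>z\<in>Q. card (cross_nbhd Q part i z) \<le> n \<and> card (cross_nbhd Q part j z) \<le> n"
    and n: "n = 2 * p + 1" and Q: "5 * p + 2 \<le> card Q" and p: "2 \<le> p"
    and a: "a \<in> Q" "2 * card (part a) \<le> n"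
  shows False
proof -
  have P': "gallai_partition Q part j i" using gallai_partition_swap[OF P] .
  have Qn: "2 * n < card Q" using n Q p by linarith
  have min_block: "p \<le> card (part u)" if "u \<in> Q" for u
    using card_le_cross_nbhds[OF P that] bounded that n Q by fastforce
  have "card (cross_nbhd Q part i a) = 2 * p + 1" "card (cross_nbhd Q part j a) = 2 * p + 1"
    "card (part a) = p"
    using card_le_cross_nbhds[OF P a(1)] bounded a n Q by fastforce+
  moreover have "card (part u) \<le> p + 1" if "u \<in> Q" "u \<notin> part a" for u
    using two_blocks_card_le[OF P bounded Qn a(1) that] calculation(3) n by linarith
  then have blocks: "\<forall>y\<in>cross_nbhd Q part k a. card (part y) = p \<or> card (part y) = p + 1" for k
    using min_block unfolding cross_nbhd_def by fastforce
  ultimately obtain y z where y: "y \<in> cross_nbhd Q part i a" "card (part y) = p + 1"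
      and z: "z \<in> cross_nbhd Q part j a" "card (part z) = p + 1"
    using odd_cross_nbhd_has_larger_block[OF P a(1) _ p] odd_cross_nbhd_has_larger_block[OF P' a(1) _ p]
    by meson
  have yz: "y \<in> Q" "z \<in> Q" using y z cross_nbhd_def by auto
  have "z \<notin> part y"
  proof
    assume "z \<in> part y"
    then have "z \<in> cross_nbhd Q part i a" using block_subset_cross_nbhd[OF P a(1) y(1)] by blast
    then show False using z(1) ij cross_nbhd_def by auto
  qed
  then have "card (part y) + card (part z) \<le> n" using two_blocks_card_le[OF P bounded Qn yz] by blast
  then show False using y z n by linarith
qed

lemma large_blocks_contra:
  assumes P: "gallai_partition Q part i j" and ij: "i \<noteq> j"
    and nontrivial: "\<exists>x\<in>Q. \<exists>y\<in>Q. y \<notin> part x" and large: "\<forall>x\<in>Q. m + 1 \<le> card (part x)"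
    and n: "n = 2 * p + e" "e \<le> 1" and Q: "5 * p + e + 1 \<le> card Q" and p: "2 \<le> p"
  shows False
proof -
  have Qn: "2 * n < card Q" using n Q p by linarith
  have bounded: "\<forall>z\<in>Q. card (cross_nbhd Q part i z) \<le> n \<and> card (cross_nbhd Q part j z) \<le> n"
    using cross_nbhd_le_of_large_block[OF P] large by blast
  obtain x y where xy: "x \<in> Q" "y \<in> Q" "y \<notin> part x" using nontrivial by blast
  have "card (part x) + card (part y) \<le> n" using two_blocks_card_le[OF P bounded Qn xy] .
  then obtain a where a: "a \<in> Q" "2 * card (part a) \<le> n"
    using xy(1,2) by (metis add_le_mono le_add2 le_trans mult_2 nat_le_linear)
  show False
  proof (cases "e = 0")
    case True
    then show False using card_le_cross_nbhds[OF P a(1)] bounded a n Q by fastforce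
  next
    case False
    then show False using large_blocks_odd_contra[OF P ij bounded _ _ p a] n Q by simp
  qed
qed

text \<open>A block of size at most m leads to a contradiction through its dominant cross color;
  if all blocks are larger, the two-colored reduced graph is too small to cover Q.\<close>

theorem gallai_partition_contra:
  assumes P: "gallai_partition Q part i j" and ij: "i \<noteq> j"
    and nontrivial: "\<exists>x\<in>Q. \<exists>y\<in>Q. y \<notin> part x" and blocks: "\<forall>x\<in>Q. card (part x) \<le> n + m"
    and n: "n = 2 * p + e" "e \<le> 1" and Q: "5 * p + e + 1 \<le> card Q" and n_large: "6 * m + 7 \<le> n"
  shows False
proof (cases "\<exists>x\<in>Q. card (part x) \<le> m")
  case True
  then obtain x where x: "x \<in> Q" "card (part x) \<le> m" by blast
  have Q1: "2 * n + 2 * m + 3 \<le> card Q" and Q2: "4 * m + 1 \<le> card Q" and mn: "m \<le> n"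
    using n Q n_large by linarith+
  show False
  proof (cases "card (cross_nbhd Q part j x) \<le> card (cross_nbhd Q part i x)")
    case True
    then show False using small_block_contra[OF P blocks mn Q1 Q2 x] by blast
  next
    case False
    then show False using small_block_contra[OF gallai_partition_swap[OF P] blocks mn Q1 Q2 x] by simp
  qed
next
  case False
  then have "\<forall>x\<in>Q. m + 1 \<le> card (part x)" by auto
  moreover have "2 \<le> p" using n n_large by linarith
  ultimately show False using large_blocks_contra[OF P ij nontrivial _ n Q] by blast
qed

lemma exists_gallai_partition_two_colors:
  assumes "finite Q" "Q \<subseteq> {..<N}" "2 \<le> card Q"
  obtains part i j where "gallai_partition Q part i j" "i \<noteq> j" "\<exists>x\<in>Q. \<exists>y\<in>Q. y \<notin> part x"
proof -
  obtain part r b where P: "gallai_partition Q part r b" and nontrivial: "\<exists>x\<in>Q. \<exists>y\<in>Q. y \<notin> part x"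
    using exists_gallai_partition[OF assms] by blast
  show thesis
  proof (cases "r = b")
    case True
    then show thesis using that[of part r "Suc r"] gallai_partition_one_color P nontrivial by simp
  next
    case False
    then show thesis using that P nontrivial by blast
  qed
qed

definition homogeneous :: "nat set \<Rightarrow> bool" where
  "homogeneous Q \<longleftrightarrow> Q \<subseteq> {..<N} \<and> (\<forall>z\<in>{..<N} - Q. \<forall>x\<in>Q. \<forall>y\<in>Q. c z x = c z y)"

definition outer_colors :: "nat set \<Rightarrow> nat \<Rightarrow> nat set" where
  "outer_colors Q q0 = (\<lambda>z. c z q0) ` ({..<N} - Q)"

lemma homogeneous_block:
  assumes H: "homogeneous Q" and P: "gallai_partition Q part r b" and x: "x \<in> Q"
  shows "homogeneous (part x)"
  unfolding homogeneous_def
proof (intro conjI ballI)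
  show "part x \<subseteq> {..<N}" using H block_subset[OF P x] unfolding homogeneous_def by blast
  fix z x1 x2 assume z: "z \<in> {..<N} - part x" and x12: "x1 \<in> part x" "x2 \<in> part x"
  show "c z x1 = c z x2"
  proof (cases "z \<in> Q")
    case True
    then show ?thesis using gallai_partitionD(4)[OF P x True] x12 z by simp
  next
    case False
    then show ?thesis using H z x12 block_subset[OF P x] unfolding homogeneous_def by blast
  qed
qed

text \<open>Otherwise an outside vertex w of color i towards Q, with leaves in Q, and q, with leaves
  among the other such outside vertices and the i-neighbours of q, centre a monochromatic
  S(n,m).\<close>

lemma homogeneous_outer_count:
  assumes H: "homogeneous Q" and Q: "n + m + 1 \<le> card Q" and q: "q0 \<in> Q" "q \<in> Q"
    and i: "i \<in> outer_colors Q q0"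
  shows "deg i Q q + card {z\<in>{..<N} - Q. c z q0 = i} \<le> m"
proof (rule ccontr)
  assume big: "\<not> ?thesis"
  let ?O = "{z\<in>{..<N} - Q. c z q0 = i}"
  obtain w where w: "w \<in> ?O" using i unfolding outer_colors_def by blast
  have QN: "Q \<subseteq> {..<N}" using H homogeneous_def by blast
  have same: "c z x = c z q0" if "z \<in> {..<N} - Q" "x \<in> Q" for z x
    using H that q(1) unfolding homogeneous_def by blast
  have N: "w < N" "q < N" "w \<noteq> q" using w QN q by auto
  have c_wq: "c w q = i" using same w q(2) by auto
  have U: "Q - {q} \<subseteq> {x. x < N \<and> x \<noteq> w \<and> x \<noteq> q \<and> c w x = i}"
    using QN w same by auto
  have W: "(?O - {w}) \<union> nbhd i Q q \<subseteq> {x. x < N \<and> x \<noteq> w \<and> x \<noteq> q \<and> c q x = i}"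
    using QN w same color_sym q(2) unfolding nbhd_def by (auto simp: subset_iff)
  have fin: "finite Q" "finite ?O" using QN finite_subset by auto
  have "card ((?O - {w}) \<union> nbhd i Q q) = card ?O - 1 + deg i Q q"
    using fin finite_nbhd[OF QN] w by (subst card_Un_disjoint) (auto simp: nbhd_def)
  moreover have "1 \<le> card ?O" using w fin(2) by (metis One_nat_def Suc_leI card_gt_0_iff empty_iff)
  ultimately have cW: "m \<le> card ((?O - {w}) \<union> nbhd i Q q)" using big by linarith
  have cU: "n + m \<le> card (Q - {q})" using Q q fin by simp
  then have "n + m \<le> card ((Q - {q}) \<union> ((?O - {w}) \<union> nbhd i Q q))"
    using fin finite_nbhd[OF QN] card_mono[of _ "Q - {q}"] by (meson Un_upper1 finite_Diff
        finite_UnI le_trans)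
  then show False
    using no_double_star_leaf_sets[OF N c_wq U W _ cW] cU by linarith
qed

lemma homogeneous_vertex_count:
  assumes H: "homogeneous Q" and Q: "n + m + 1 \<le> card Q" and q: "q0 \<in> Q" "q \<in> Q"
  shows "N \<le> 1 + card {y \<in> Q - {q}. c q y \<notin> outer_colors Q q0} + m * card (outer_colors Q q0)"
proof -
  let ?out = "outer_colors Q q0" and ?S = "{y \<in> Q - {q}. c q y \<notin> outer_colors Q q0}"
  let ?O = "\<lambda>i. {z\<in>{..<N} - Q. c z q0 = i}"
  have QN: "Q \<subseteq> {..<N}" using H homogeneous_def by blast
  have fin: "finite Q" "finite ?out" using QN finite_subset unfolding outer_colors_def by auto
  have "Q \<subseteq> insert q (?S \<union> (\<Union>i\<in>?out. nbhd i Q q))" unfolding nbhd_def by blast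
  moreover have fin_rest: "finite (?S \<union> (\<Union>i\<in>?out. nbhd i Q q))"
    using fin finite_nbhd[OF QN] by auto
  ultimately have "card Q \<le> card (insert q (?S \<union> (\<Union>i\<in>?out. nbhd i Q q)))"
    by (simp add: card_mono)
  also have "\<dots> \<le> 1 + card (?S \<union> (\<Union>i\<in>?out. nbhd i Q q))"
    using fin_rest by (simp add: card_insert_if)
  also have "\<dots> \<le> 1 + card ?S + card (\<Union>i\<in>?out. nbhd i Q q)" using card_Un_le by simp
  also have "card (\<Union>i\<in>?out. nbhd i Q q) \<le> (\<Sum>i\<in>?out. deg i Q q)" by (rule card_UN_le[OF fin(2)])
  finally have inside: "card Q \<le> 1 + card ?S + (\<Sum>i\<in>?out. deg i Q q)" by simp
  have "{..<N} - Q = (\<Union>i\<in>?out. ?O i)" unfolding outer_colors_def by auto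
  then have "card ({..<N} - Q) \<le> (\<Sum>i\<in>?out. card (?O i))"
    using card_UN_le[OF fin(2), of ?O] by (simp only:)
  then have "card ({..<N} - Q) + (\<Sum>i\<in>?out. deg i Q q) \<le> (\<Sum>i\<in>?out. deg i Q q + card (?O i))"
    by (simp add: sum.distrib)
  also have "\<dots> \<le> (\<Sum>i\<in>?out. m)"
    using homogeneous_outer_count[OF H Q q] by (intro sum_mono) blast
  finally have outside: "card ({..<N} - Q) + (\<Sum>i\<in>?out. deg i Q q) \<le> m * card ?out"
    by (simp add: mult.commute)
  have "card Q \<le> N" using card_mono[OF _ QN] by simp
  then have "N = card Q + card ({..<N} - Q)" using card_Diff_subset[OF fin(1) QN] by simp
  then show ?thesis using inside outside by linarith
qed

lemma homogeneous_inner_count: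
  assumes H: "homogeneous Q" and Q: "n + m + 1 \<le> card Q" and q: "q0 \<in> Q" "q \<in> Q"
  shows "N \<le> 1 + (\<Sum>r\<in>colors Q - outer_colors Q q0. deg r Q q) + m * card (outer_colors Q q0)"
proof -
  let ?out = "outer_colors Q q0" and ?st = "colors Q - outer_colors Q q0"
  have QN: "Q \<subseteq> {..<N}" using H homogeneous_def by blast
  have fin_st: "finite ?st" using finite_colors[OF finite_subset[OF QN]] by simp
  have "{y \<in> Q - {q}. c q y \<notin> ?out} \<subseteq> (\<Union>r\<in>?st. nbhd r Q q)"
  proof
    fix y assume y: "y \<in> {y \<in> Q - {q}. c q y \<notin> ?out}"
    then have "c q y \<in> ?st" using q(2) unfolding colors_def by blast
    moreover have "y \<in> nbhd (c q y) Q q" using y unfolding nbhd_def by simp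
    ultimately show "y \<in> (\<Union>r\<in>?st. nbhd r Q q)" by blast
  qed
  moreover have "finite (\<Union>r\<in>?st. nbhd r Q q)" using fin_st finite_nbhd[OF QN] by blast
  ultimately have "card {y \<in> Q - {q}. c q y \<notin> ?out} \<le> card (\<Union>r\<in>?st. nbhd r Q q)"
    by (rule card_mono[rotated])
  also have "\<dots> \<le> (\<Sum>r\<in>?st. deg r Q q)" by (rule card_UN_le[OF fin_st])
  finally show ?thesis using homogeneous_vertex_count[OF H Q q] by linarith
qed

lemma few_inner_colors_contra:
  assumes H: "homogeneous Q" and Q: "n + m + 1 \<le> card Q" and q0: "q0 \<in> Q"
    and few: "card (colors Q - outer_colors Q q0) \<le> 2"
    and total: "card (outer_colors Q q0) + card (colors Q - outer_colors Q q0) \<le> K + 3"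
    and N: "2 * n + 3 * m + 2 + m * K \<le> N"
  shows False
proof -
  let ?out = "outer_colors Q q0" and ?st = "colors Q - outer_colors Q q0"
  have QN: "Q \<subseteq> {..<N}" using H homogeneous_def by blast
  have "Q \<noteq> {}" using Q by auto
  have "m * (card ?out + card ?st) \<le> m * (K + 3)" using total by (rule mult_le_mono2)
  then have out: "m * card ?out + m * card ?st \<le> m * K + 3 * m" by (simp add: algebra_simps)
  have fin_st: "finite ?st" using finite_colors[OF finite_subset[OF QN]] by simp
  note inner = homogeneous_inner_count[OF H Q q0]
  show False
  proof (cases rule: card_le_2_cases[OF fin_st few])
    case 1
    then show False using inner[OF q0] out N unfolding 1 by simp
  next
    case (2 r)
    have "2 * n + 2 * m + 1 \<le> deg r Q x + deg r Q x" if "x \<in> Q" for x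
      using inner[OF that] out N unfolding 2 by simp
    then show False using two_color_dense_contra[OF QN \<open>Q \<noteq> {}\<close>] by blast
  next
    case (3 r b)
    have "2 * n + 2 * m + 1 \<le> deg r Q x + deg b Q x" if "x \<in> Q" for x
      using inner[OF that] out N unfolding 3(1) by (simp add: 3(2))
    then show False using two_color_dense_contra[OF QN \<open>Q \<noteq> {}\<close>] by blast
  qed
qed

text \<open>With at least three colors inside the minimal homogeneous set Q, at most K colors
  lead out of it, so Q is large; the blocks of a Gallai partition of Q are again homogeneous,
  hence small by minimality.\<close>

lemma many_inner_colors_contra:
  assumes H: "homogeneous Q" and Q: "n + m + 1 \<le> card Q" and q0: "q0 \<in> Q"
    and minimal: "\<And>Q'. homogeneous Q' \<Longrightarrow> n + m + 1 \<le> card Q' \<Longrightarrow> card Q \<le> card Q'"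
    and many: "3 \<le> card (colors Q - outer_colors Q q0)"
    and total: "card (outer_colors Q q0) + card (colors Q - outer_colors Q q0) \<le> K + 3"
    and n: "n = 2 * p + e" "e \<le> 1" and N: "5 * p + e + 1 + m * K \<le> N"
    and n_large: "6 * m + 7 \<le> n"
  shows False
proof -
  have QN: "Q \<subseteq> {..<N}" using H homogeneous_def by blast
  have fin: "finite Q" using QN by (rule finite_subset) simp
  have "card {y \<in> Q - {q0}. c q0 y \<notin> outer_colors Q q0} \<le> card (Q - {q0})"
    using fin by (intro card_mono) auto
  then have "card {y \<in> Q - {q0}. c q0 y \<notin> outer_colors Q q0} \<le> card Q - 1"
    using q0 fin by simp
  then have "N \<le> card Q + m * card (outer_colors Q q0)"
    using homogeneous_vertex_count[OF H Q q0 q0] Q by linarith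
  moreover have "card (outer_colors Q q0) \<le> K" using many total by linarith
  then have "m * card (outer_colors Q q0) \<le> m * K" by (rule mult_le_mono2)
  ultimately have big: "5 * p + e + 1 \<le> card Q" using N by linarith
  have "2 \<le> card Q" using Q n_large by linarith
  then obtain part i j where P: "gallai_partition Q part i j" "i \<noteq> j"
    and nontrivial: "\<exists>x\<in>Q. \<exists>y\<in>Q. y \<notin> part x"
    using exists_gallai_partition_two_colors[OF fin QN] by blast
  have "card (part x) \<le> n + m" if x: "x \<in> Q" for x
    using minimal[OF homogeneous_block[OF H P(1) x]] card_block_less[OF P(1) nontrivial x] by fastforce
  then show False using gallai_partition_contra[OF P nontrivial _ n big n_large] by blast
qed

theorem gallai_coloring_contra:
  assumes colors_lt: "\<And>x y. x < N \<Longrightarrow> y < N \<Longrightarrow> x \<noteq> y \<Longrightarrow> c x y < K + 3"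
    and n: "n = 2 * p + e" "e \<le> 1" and N: "5 * p + e + 1 + m * K \<le> N"
    and n_large: "6 * m + 7 \<le> n"
  shows False
proof -
  have "homogeneous {..<N}" unfolding homogeneous_def by simp
  moreover have "n + m + 1 \<le> card {..<N}" using n N n_large by simp
  ultimately obtain Q where Q: "homogeneous Q" "n + m + 1 \<le> card Q"
    and minimal: "\<And>Q'. homogeneous Q' \<Longrightarrow> n + m + 1 \<le> card Q' \<Longrightarrow> card Q \<le> card Q'"
    using ex_has_least_nat[of "\<lambda>Q. homogeneous Q \<and> n + m + 1 \<le> card Q" "{..<N}" card] by blast
  have QN: "Q \<subseteq> {..<N}" using Q(1) homogeneous_def by blast
  obtain q0 where q0: "q0 \<in> Q" using Q(2) by fastforce
  let ?out = "outer_colors Q q0" and ?st = "colors Q - outer_colors Q q0"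
  have "?out \<union> ?st \<subseteq> {..<K + 3}"
    using colors_lt QN q0 unfolding outer_colors_def colors_def by auto
  then have "card (?out \<union> ?st) \<le> K + 3" using card_mono[of "{..<K + 3}"] by fastforce
  moreover have "finite ?out" "finite ?st"
    using finite_colors[OF finite_subset[OF QN]] unfolding outer_colors_def by auto
  then have "card (?out \<union> ?st) = card ?out + card ?st" by (subst card_Un_disjoint) auto
  ultimately have total: "card ?out + card ?st \<le> K + 3" by linarith
  show False
  proof (cases "3 \<le> card ?st")
    case True
    then show False using many_inner_colors_contra[OF Q q0 minimal _ total n N n_large] by blast
  next
    case False
    have "2 * n + 3 * m + 2 + m * K \<le> N" using n N n_large by linarith
    then show False using few_inner_colors_contra[OF Q q0 _ total] False by simp
  qed
qed

end

section \<open>The extremal coloring\<close>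

lemma div_bounds:
  fixes y q :: nat
  assumes "0 < q"
  shows "y div q * q \<le> y" "y < y div q * q + q"
proof -
  have "y = y div q * q + y mod q" by simp
  moreover have "y mod q < q" using assms by simp
  ultimately show "y div q * q \<le> y" "y < y div q * q + q" by linarith+
qed

lemma min_no_rainbow:
  fixes a b c :: nat
  shows "min a b = min b c \<or> min b c = min a c \<or> min a b = min a c"
  by (simp add: min_def)

definition pentagon_color :: "nat \<Rightarrow> nat \<Rightarrow> nat" where
  "pentagon_color a b =
     (if a = b then 2 else if (a + 1) mod 5 = b \<or> (b + 1) mod 5 = a then 0 else 1)"

lemma pentagon_color_sym: "pentagon_color a b = pentagon_color b a"
  unfolding pentagon_color_def by auto

lemma pentagon_no_rainbow:
  "pentagon_color a b = pentagon_color b c \<or> pentagon_color b c = pentagon_color a c \<or>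
     pentagon_color a b = pentagon_color a c"
  unfolding pentagon_color_def by auto

lemma pentagon_color_classes:
  assumes "(a::nat) < 5"
  obtains t1 t2 where "t1 \<noteq> t2" "\<And>b. b < 5 \<Longrightarrow> pentagon_color a b = i \<Longrightarrow> b = t1 \<or> b = t2"
proof -
  have five: "\<And>x::nat. x < 5 \<longleftrightarrow> x = 0 \<or> x = 1 \<or> x = 2 \<or> x = 3 \<or> x = 4" by auto
  consider "i = 0" | "i = 1" | "i \<noteq> 0" "i \<noteq> 1" by blast
  then show thesis
  proof cases
    case 1
    show thesis
      by (rule that[of "(a + 1) mod 5" "(a + 4) mod 5"]) (use assms 1 in \<open>auto simp: five pentagon_color_def\<close>)
  next
    case 2
    show thesis
      by (rule that[of "(a + 2) mod 5" "(a + 3) mod 5"]) (use assms 2 in \<open>auto simp: five pentagon_color_def\<close>)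
  next
    case 3
    show thesis
      by (rule that[of a "(a + 1) mod 5"]) (use assms 3 in \<open>auto simp: five pentagon_color_def\<close>)
  qed
qed

lemma mono_double_star_mono:
  assumes "mono_double_star N c n m" "N \<le> N'"
  shows "mono_double_star N' c n m"
proof -
  obtain u v A B where uv: "u < N" "v < N" "u \<noteq> v"
    and AB: "A \<subseteq> {0..<N} - {u, v}" "B \<subseteq> {0..<N} - {u, v}"
    and rest: "A \<inter> B = {}" "card A = n" "card B = m" "\<forall>a\<in>A. c u a = c u v" "\<forall>b\<in>B. c v b = c u v"
    using assms(1) unfolding mono_double_star_def by blast
  have "{0..<N} - {u, v} \<subseteq> {0..<N'} - {u, v}" using assms(2) by auto
  then have "A \<subseteq> {0..<N'} - {u, v}" "B \<subseteq> {0..<N'} - {u, v}" using AB by blast+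
  moreover have "u < N'" "v < N'" using uv assms(2) by linarith+
  ultimately show ?thesis unfolding mono_double_star_def using uv(3) rest by blast
qed

text \<open>A core of 5p + e vertices is split into five blocks (block 0 takes the extra vertex when
  e = 1) and colored as a blow-up of the pentagon/pentagram coloring of K_5, with color 2 inside
  blocks; it is followed by K layers of m vertices, layer j having color 2 inside and color
  3 + j towards all later layers and the core.\<close>

locale extremal_coloring =
  fixes p e m K :: nat
  assumes p: "2 \<le> p" and e: "e \<le> 1" and m: "1 \<le> m" "m \<le> p"
begin

definition core_size :: nat where
  "core_size = 5 * p + e"

definition num_vertices :: nat where
  "num_vertices = core_size + m * K"

definition block :: "nat \<Rightarrow> nat" where
  "block x = (x - e) div p"

definition level :: "nat \<Rightarrow> nat" where
  "level x = (if x < core_size then K else (x - core_size) div m)"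

definition color :: "nat \<Rightarrow> nat \<Rightarrow> nat" where
  "color x y =
     (if level x = level y then (if x < core_size then pentagon_color (block x) (block y) else 2)
      else 3 + min (level x) (level y))"

definition color_nbhd :: "nat \<Rightarrow> nat \<Rightarrow> nat set" where
  "color_nbhd i x = {y. y < num_vertices \<and> y \<noteq> x \<and> color x y = i}"

definition layer :: "nat \<Rightarrow> nat set" where
  "layer j = {y. y < num_vertices \<and> core_size \<le> y \<and> level y = j}"

definition core_block :: "nat \<Rightarrow> nat set" where
  "core_block t = {y. y < core_size \<and> block y = t}"

lemma block_lt_5: "x < core_size \<Longrightarrow> block x < 5"
  using p e unfolding block_def core_size_def by (simp add: div_less_iff_less_mult)

lemma level_lt_K: "x < num_vertices \<Longrightarrow> core_size \<le> x \<Longrightarrow> level x < K"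
  using m unfolding level_def num_vertices_def by (simp add: div_less_iff_less_mult mult.commute)

lemma level_eq_K_iff: "x < num_vertices \<Longrightarrow> level x = K \<longleftrightarrow> x < core_size"
  using level_lt_K by (fastforce simp: level_def)

lemma level_le_K: "x < num_vertices \<Longrightarrow> level x \<le> K"
  using level_lt_K by (fastforce simp: level_def)

lemma color_sym:
  assumes "x < num_vertices" "y < num_vertices"
  shows "color x y = color y x"
proof (cases "level x = level y")
  case True
  then have "x < core_size \<longleftrightarrow> y < core_size" using level_eq_K_iff assms by metis
  then show ?thesis using True pentagon_color_sym unfolding color_def by simp
next
  case False
  then show ?thesis unfolding color_def by (simp add: min.commute)
qed

lemma pentagon_color_le_2: "pentagon_color a b \<le> 2"
  unfolding pentagon_color_def by simp

lemma color_lt: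
  assumes "x < num_vertices" "y < num_vertices"
  shows "color x y < K + 3"
proof (cases "level x = level y")
  case True
  then have "color x y \<le> 2" using pentagon_color_le_2 unfolding color_def by simp
  then show ?thesis by simp
next
  case False
  then have "min (level x) (level y) < K" using level_le_K[OF assms(1)] level_le_K[OF assms(2)] by linarith
  then show ?thesis using False unfolding color_def by simp
qed

lemma color_no_rainbow:
  assumes "x < num_vertices" "y < num_vertices" "z < num_vertices"
  shows "color x y = color y z \<or> color y z = color x z \<or> color x y = color x z"
proof (cases "level x = level y \<and> level y = level z")
  case True
  then have "x < core_size \<longleftrightarrow> y < core_size" "x < core_size \<longleftrightarrow> z < core_size"
    using level_eq_K_iff assms by metis+
  then show ?thesis using True pentagon_no_rainbow unfolding color_def by auto
next
  case False
  then show ?thesis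
    using min_no_rainbow[of "level x" "level y" "level z"] unfolding color_def by (auto simp: min_def)
qed

lemma finite_layer: "finite (layer j)"
  unfolding layer_def by simp

lemma card_layer_le: "card (layer j) \<le> m"
proof -
  have "layer j \<subseteq> {core_size + j * m ..< core_size + j * m + m}"
  proof
    fix y assume "y \<in> layer j"
    then have y: "core_size \<le> y" "(y - core_size) div m = j" unfolding layer_def level_def by auto
    then have "j * m \<le> y - core_size" "y - core_size < j * m + m"
      using div_bounds[of m "y - core_size"] m by auto
    then show "y \<in> {core_size + j * m ..< core_size + j * m + m}" using y(1) by auto
  qed
  then have "card (layer j) \<le> card {core_size + j * m ..< core_size + j * m + m}"
    by (rule card_mono[OF finite_atLeastLessThan])
  then show ?thesis by simp
qed

lemma card_core_block_le: "card (core_block t) \<le> p + (if t = 0 then e else 0)"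
proof -
  have "core_block t \<subseteq> {t * p + (if t = 0 then 0 else e) ..< t * p + p + e}"
  proof
    fix y assume "y \<in> core_block t"
    then have y: "(y - e) div p = t" unfolding core_block_def block_def by auto
    then have "t * p \<le> y - e" "y - e < t * p + p" using div_bounds[of p "y - e"] p by auto
    moreover have "t \<noteq> 0 \<Longrightarrow> e \<le> y" using y p by (metis diff_is_0_eq div_0 nat_le_linear)
    ultimately show "y \<in> {t * p + (if t = 0 then 0 else e) ..< t * p + p + e}" by auto
  qed
  then have "card (core_block t) \<le> card {t * p + (if t = 0 then 0 else e) ..< t * p + p + e}"
    by (rule card_mono[OF finite_atLeastLessThan])
  then show ?thesis by (simp split: if_splits)
qed

lemma card_two_core_blocks_le:
  "t1 \<noteq> t2 \<Longrightarrow> card (core_block t1 \<union> core_block t2) \<le> 2 * p + e"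
  using card_Un_le[of "core_block t1" "core_block t2"] card_core_block_le[of t1]
    card_core_block_le[of t2] by (auto split: if_splits)

lemma color_ge_3_iff: "3 \<le> color x y \<longleftrightarrow> level x \<noteq> level y"
proof (cases "level x = level y")
  case True
  then have "color x y \<le> 2" using pentagon_color_le_2[of "block x" "block y"] unfolding color_def by simp
  then show ?thesis using True by simp
qed (simp add: color_def)

lemma color_nbhd_high_subset_layer:
  assumes x: "x < num_vertices" and j: "j \<noteq> level x"
  shows "color_nbhd (3 + j) x \<subseteq> layer j"
proof
  fix y assume "y \<in> color_nbhd (3 + j) x"
  then have y: "y < num_vertices" "color x y = 3 + j" unfolding color_nbhd_def by auto
  then have ne: "level x \<noteq> level y" using color_ge_3_iff by fastforce
  then have "min (level x) (level y) = j" using y(2) unfolding color_def by simp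
  then have ly: "level y = j" "j < level x" using j ne by (auto simp: min_def split: if_splits)
  then have "core_size \<le> y" using level_eq_K_iff[OF y(1)] level_le_K[OF x] by fastforce
  then show "y \<in> layer j" using y(1) ly(1) unfolding layer_def by simp
qed

lemma card_color_nbhd_high:
  assumes x: "x < num_vertices" and i: "3 \<le> i" "i \<noteq> 3 + level x \<or> level x = K"
  shows "card (color_nbhd i x) \<le> 2 * p + e"
proof (cases "i = 3 + level x")
  case False
  then have "color_nbhd i x \<subseteq> layer (i - 3)" using color_nbhd_high_subset_layer[OF x] i(1)
    by (metis add_diff_inverse_nat add_diff_cancel_left' not_less)
  then have "card (color_nbhd i x) \<le> m"
    using card_layer_le card_mono[OF finite_layer] le_trans by blast
  then show ?thesis using m by linarith
next
  case True
  then have K: "level x = K" using i by simp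
  have "color_nbhd i x = {}"
  proof (rule ccontr)
    assume "color_nbhd i x \<noteq> {}"
    then obtain y where y: "y < num_vertices" "color x y = 3 + K" unfolding color_nbhd_def using True K by auto
    then have "level x \<noteq> level y" using color_ge_3_iff by fastforce
    then show False using y(2) K level_le_K[OF y(1)] unfolding color_def by (simp add: min_def)
  qed
  then show ?thesis by simp
qed

lemma color_nbhd_low_level:
  assumes "i < 3" "y \<in> color_nbhd i x"
  shows "level y = level x"
  using assms color_ge_3_iff[of x y] unfolding color_nbhd_def by auto

lemma card_color_nbhd_low_core:
  assumes x: "x < core_size" and i: "i < 3"
  shows "card (color_nbhd i x) \<le> 2 * p + e"
proof -
  obtain t1 t2 where t: "t1 \<noteq> t2"
    and classes: "\<And>b. b < 5 \<Longrightarrow> pentagon_color (block x) b = i \<Longrightarrow> b = t1 \<or> b = t2"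
    using pentagon_color_classes[OF block_lt_5[OF x]] by blast
  have "color_nbhd i x \<subseteq> core_block t1 \<union> core_block t2"
  proof
    fix y assume y: "y \<in> color_nbhd i x"
    have "level y = K" using color_nbhd_low_level[OF i y] x unfolding level_def by simp
    then have "y < core_size" using level_eq_K_iff y unfolding color_nbhd_def by blast
    moreover have "pentagon_color (block x) (block y) = i"
      using color_nbhd_low_level[OF i y] x y unfolding color_nbhd_def color_def by simp
    ultimately show "y \<in> core_block t1 \<union> core_block t2"
      using classes block_lt_5 unfolding core_block_def by blast
  qed
  then have "card (color_nbhd i x) \<le> card (core_block t1 \<union> core_block t2)"
    by (rule card_mono[rotated]) (simp add: core_block_def)
  then show ?thesis using card_two_core_blocks_le[OF t] by linarith
qed

lemma card_color_nbhd_low_layer: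
  assumes x: "x < num_vertices" "core_size \<le> x" and i: "i < 3"
  shows "card (color_nbhd i x) \<le> 2 * p + e"
proof -
  have "color_nbhd i x \<subseteq> layer (level x)"
  proof
    fix y assume y: "y \<in> color_nbhd i x"
    then have "level y = level x" "y < num_vertices" using color_nbhd_low_level[OF i] color_nbhd_def by auto
    moreover have "core_size \<le> y" using calculation level_eq_K_iff x by (metis not_le)
    ultimately show "y \<in> layer (level x)" unfolding layer_def by simp
  qed
  then have "card (color_nbhd i x) \<le> card (layer (level x))"
    by (rule card_mono[rotated]) (simp add: layer_def)
  then show ?thesis using card_layer_le[of "level x"] m by linarith
qed

lemma card_color_nbhd_le:
  assumes x: "x < num_vertices" and i: "i \<noteq> 3 + level x \<or> level x = K"
  shows "card (color_nbhd i x) \<le> 2 * p + e"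
  using card_color_nbhd_high[OF x _ i] card_color_nbhd_low_core card_color_nbhd_low_layer[OF x]
  by (meson not_le)

text \<open>The centre u of a monochromatic S(2p + e, m) has too many neighbours in the star color
  unless it is 3 + level u; then the other centre has all its neighbours of that color in the
  layer of u, which has only m vertices.\<close>

lemma no_mono_double_star: "\<not> mono_double_star num_vertices color (2 * p + e) m"
proof
  assume "mono_double_star num_vertices color (2 * p + e) m"
  then obtain u v A B where uv: "u < num_vertices" "v < num_vertices" "u \<noteq> v"
    and A: "A \<subseteq> {0..<num_vertices} - {u, v}" "card A = 2 * p + e" "\<forall>a\<in>A. color u a = color u v"
    and B: "B \<subseteq> {0..<num_vertices} - {u, v}" "card B = m" "\<forall>b\<in>B. color v b = color u v"
    unfolding mono_double_star_def by blast
  let ?i = "color u v"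
  have fin: "finite (color_nbhd ?i u)" "finite (color_nbhd ?i v)" unfolding color_nbhd_def by simp_all
  have "finite A" "finite B" using A(1) B(1) by (meson finite_Diff finite_atLeastLessThan finite_subset)+
  have "v \<notin> A" "u \<notin> B" using A(1) B(1) by blast+
  have "insert v A \<subseteq> color_nbhd ?i u" using A uv unfolding color_nbhd_def by auto
  moreover have "card (insert v A) = 2 * p + e + 1" using A(2) \<open>finite A\<close> \<open>v \<notin> A\<close> by simp
  ultimately have big: "2 * p + e + 1 \<le> card (color_nbhd ?i u)" using card_mono[OF fin(1)] by metis
  have i: "?i = 3 + level u \<and> level u \<noteq> K"
  proof (rule ccontr)
    assume "\<not> ?thesis"
    then have "card (color_nbhd ?i u) \<le> 2 * p + e" using card_color_nbhd_le[OF uv(1)] by blast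
    then show False using big by linarith
  qed
  then have "level v \<noteq> level u" using color_ge_3_iff[of u v] by simp
  then have "color_nbhd ?i v \<subseteq> layer (level u)" using color_nbhd_high_subset_layer[OF uv(2)] i by simp
  then have "card (color_nbhd ?i v) \<le> m"
    using order_trans[OF card_mono[OF finite_layer] card_layer_le] by blast
  moreover have "insert u B \<subseteq> color_nbhd ?i v"
    using B uv color_sym unfolding color_nbhd_def by auto
  then have "card (insert u B) \<le> card (color_nbhd ?i v)" by (rule card_mono[OF fin(2)])
  moreover have "card (insert u B) = m + 1" using B(2) \<open>finite B\<close> \<open>u \<notin> B\<close> by simp
  ultimately show False by linarith
qed

lemma extremal_coloring_witness:
  assumes "N \<le> num_vertices"
  shows "k_coloring (K + 3) N color" "\<not> rainbow_K3 N color" "\<not> mono_double_star N color (2 * p + e) m"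
proof -
  show "k_coloring (K + 3) N color"
    unfolding k_coloring_def using assms by (auto intro: color_sym color_lt)
  show "\<not> rainbow_K3 N color"
  proof
    assume "rainbow_K3 N color"
    then obtain x y z where "x < N" "y < N" "z < N" "color x y \<noteq> color y z"
      "color y z \<noteq> color x z" "color x y \<noteq> color x z"
      unfolding rainbow_K3_def by blast
    then show False using color_no_rainbow[of x y z] assms by simp
  qed
  show "\<not> mono_double_star N color (2 * p + e) m"
    using no_mono_double_star mono_double_star_mono assms by blast
qed

end

section \<open>The Gallai-Ramsey number\<close>

lemma gallai_ramsey_upper:
  assumes c: "k_coloring (K + 3) N c" and N: "5 * p + e + 1 + m * K \<le> N"
    and n: "n = 2 * p + e" "e \<le> 1" and n_large: "6 * m + 7 \<le> n"
  shows "rainbow_K3 N c \<or> mono_double_star N c n m"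
proof (rule ccontr)
  assume none: "\<not> ?thesis"
  interpret double_star_free N c n m
  proof
    show "c x y = c y x" if "x \<in> {..<N}" "y \<in> {..<N}" for x y
      using c that unfolding k_coloring_def by (cases "x = y") auto
    show "c x y = c y z \<or> c y z = c x z \<or> c x y = c x z"
      if "x \<in> {..<N}" "y \<in> {..<N}" "z \<in> {..<N}" "x \<noteq> y" "y \<noteq> z" "x \<noteq> z" for x y z
      using none that unfolding rainbow_K3_def by auto
    show "\<not> mono_double_star N c n m" using none by blast
  qed
  show False
    using gallai_coloring_contra[OF _ n N n_large] c unfolding k_coloring_def by blast
qed

lemma gallai_ramsey_lower:
  assumes N: "N \<le> 5 * p + e + m * K"
    and n: "n = 2 * p + e" "e \<le> 1" and m: "1 \<le> m" and n_large: "6 * m + 7 \<le> n"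
  obtains c where "k_coloring (K + 3) N c" "\<not> rainbow_K3 N c" "\<not> mono_double_star N c n m"
proof -
  interpret extremal_coloring p e m K using n m n_large by unfold_locales linarith+
  have "N \<le> num_vertices" using N unfolding num_vertices_def core_size_def by simp
  then show thesis using that extremal_coloring_witness n(1) by blast
qed

theorem theorem5:
  fixes n m k :: nat
  assumes "m \<ge> 1" and "k \<ge> 3" and "n \<ge> 6 * m + 7"
  shows "gr_K3_double_star k n m =
           (if even n then 5 * (n div 2) + m * (k - 3) + 1
            else 5 * ((n - 1) div 2) + m * (k - 3) + 2)"
proof -
  define p e K where "p = n div 2" and "e = n mod 2" and "K = k - 3"
  have n: "n = 2 * p + e" "e \<le> 1" and k: "k = K + 3" using assms(2) unfolding p_def e_def K_def by auto
  have closed_form: "(if even n then 5 * (n div 2) + m * (k - 3) + 1 else 5 * ((n - 1) div 2) + m * (k - 3) + 2)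
      = 5 * p + e + 1 + m * K"
    unfolding p_def e_def K_def by (auto elim: oddE)
  have "gr_K3_double_star k n m = 5 * p + e + 1 + m * K"
    unfolding gr_K3_double_star_def k
  proof (rule Least_equality)
    show "\<forall>c. k_coloring (K + 3) (5 * p + e + 1 + m * K) c \<longrightarrow>
        rainbow_K3 (5 * p + e + 1 + m * K) c \<or> mono_double_star (5 * p + e + 1 + m * K) c n m"
      by (intro allI impI gallai_ramsey_upper[OF _ order_refl n assms(3)])
    show "5 * p + e + 1 + m * K \<le> N"
      if "\<forall>c. k_coloring (K + 3) N c \<longrightarrow> rainbow_K3 N c \<or> mono_double_star N c n m" for N
    proof (rule ccontr)
      assume "\<not> ?thesis"
      then obtain c where "k_coloring (K + 3) N c" "\<not> rainbow_K3 N c" "\<not> mono_double_star N c n m"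
        using gallai_ramsey_lower[OF _ n assms(1,3), of N K] by force
      then show False using that by blast
    qed
  qed
  then show ?thesis using closed_form by simp
qed

end
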